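(* Let $k$ be a field with char $k\neq 2$ and $K=k(\sqrt{a})$ be a separable quadratic field extension of $k$ with $a \in k$. Write ${\rm Gal}(K/k)= \langle \sigma \rangle$ and extend the action of $\sigma$ to the rational function field $K(x,y)$ by $\sigma: \sqrt{a} \mapsto -\sqrt{a},\ x \mapsto x,\ y\mapsto \frac{f(x)}{y}$, where $f(x)\in k[x]\setminus \{0\}$. Then the fixed field $K(x,y)^{\langle\sigma\rangle}$ is $k$-isomorphic to the field $k(x, t_1, t_2)$ with the relation $t_1^2-at_2^2=f(x)$. Conversely, if $L_0=k(x, t_1, t_2)$ is a field extension of $k$ satisfying ${\rm trdeg}_k(L_0)=2$ and $t_1^2-at_2^2=f(x)$, a non-zero polynomial in $k[x]$, then $L_0$ is $k$-isomorphic to the fixed subfield $k(\sqrt{a})(x,y)^{\langle\sigma\rangle}$ where $\sigma$ acts by $\sqrt{a} \mapsto -\sqrt{a},\ x \mapsto x,\ y\mapsto \frac{f(x)}{y}$.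
   Context: $K(x,y)^{\langle\sigma\rangle}=\{u\in K(x,y):\sigma(u)=u\}$ denotes the fixed subfield. *)

theory Defs
  imports "HOL-Computational_Algebra.Polynomial"
begin

definition is_subfield :: "'a::field set \<Rightarrow> bool" where
  "is_subfield S \<longleftrightarrow> 0 \<in> S \<and> 1 \<in> S \<and>
     (\<forall>u\<in>S. \<forall>v\<in>S. u + v \<in> S \<and> u * v \<in> S) \<and>
     (\<forall>u\<in>S. - u \<in> S \<and> inverse u \<in> S)"

definition gen_field :: "'a::field set \<Rightarrow> 'a set" where
  "gen_field A = \<Inter> {S. is_subfield S \<and> A \<subseteq> S}"

definition field_emb :: "('k::field \<Rightarrow> 'a::field) \<Rightarrow> bool" where
  "field_emb \<iota> \<longleftrightarrow> (\<forall>u v. \<iota> (u + v) = \<iota> u + \<iota> v) \<and>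
     (\<forall>u v. \<iota> (u * v) = \<iota> u * \<iota> v) \<and> \<iota> 1 = 1"

definition alg_indep :: "'a::field set \<Rightarrow> 'a set \<Rightarrow> bool" where
  "alg_indep F B \<longleftrightarrow> finite B \<and>
     (\<forall>(M :: ('a \<Rightarrow> nat) set) c. finite M \<and> (\<forall>m\<in>M. \<forall>b. b \<notin> B \<longrightarrow> m b = 0) \<and>
        (\<forall>m\<in>M. c m \<in> F) \<and> (\<Sum>m\<in>M. c m * (\<Prod>b\<in>B. b ^ m b)) = 0
        \<longrightarrow> (\<forall>m\<in>M. c m = 0))"

definition algebraic_over :: "'a::field set \<Rightarrow> 'a \<Rightarrow> bool" where
  "algebraic_over S e \<longleftrightarrow> (\<exists>p. p \<noteq> 0 \<and> (\<forall>i. coeff p i \<in> S) \<and> poly p e = 0)"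

definition trdeg_eq :: "'a::field set \<Rightarrow> 'a set \<Rightarrow> nat \<Rightarrow> bool" where
  "trdeg_eq F E n \<longleftrightarrow> (\<exists>B. B \<subseteq> E \<and> finite B \<and> card B = n \<and> alg_indep F B \<and>
       (\<forall>e\<in>E. algebraic_over (gen_field (F \<union> B)) e))"

definition k_iso :: "('k \<Rightarrow> 'a::field) \<Rightarrow> 'a set \<Rightarrow> ('k \<Rightarrow> 'b::field) \<Rightarrow> 'b set \<Rightarrow> bool" where
  "k_iso j A i B \<longleftrightarrow> (\<exists>\<phi>. bij_betw \<phi> A B \<and>
      (\<forall>u\<in>A. \<forall>v\<in>A. \<phi> (u + v) = \<phi> u + \<phi> v \<and> \<phi> (u * v) = \<phi> u * \<phi> v) \<and>
      (\<forall>c. \<phi> (j c) = i c))"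

end

theory Submission
  imports Defs
begin

text \<open>Put \<open>F = f(x)\<close>. The elements \<open>t\<^sub>1 = (y + F/y)/2\<close> and
  \<open>t\<^sub>2 = (y - F/y)/(2\<surd>a)\<close> are \<open>\<sigma>\<close>-invariant (\<open>\<sigma>\<close> swaps \<open>y\<close> and \<open>F/y\<close> and negates
  \<open>\<surd>a\<close>), satisfy \<open>t\<^sub>1\<^sup>2 - a t\<^sub>2\<^sup>2 = F\<close>, and \<open>y = t\<^sub>1 + \<surd>a t\<^sub>2\<close>. Hence
  \<open>K(x, y) = k(x, t\<^sub>1, t\<^sub>2)(\<surd>a)\<close>, and an element \<open>p + \<surd>a q\<close> with \<open>p, q \<in> k(x, t\<^sub>1, t\<^sub>2)\<close>
  is fixed only if \<open>q = 0\<close>: the fixed field is \<open>k(x, t\<^sub>1, t\<^sub>2)\<close>. Here \<open>x, t\<^sub>1\<close> are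
  algebraically independent, and \<open>t\<^sub>2\<close> is a square root of \<open>(t\<^sub>1\<^sup>2 - F)/a\<close> outside
  \<open>k(x, t\<^sub>1)\<close> because \<open>a\<close> is not a square in \<open>k\<close>.

  Conversely, in \<open>L\<^sub>0 = k(x\<^sub>0, t\<^sub>1, t\<^sub>2)\<close> of transcendence degree 2 the pair \<open>x\<^sub>0, t\<^sub>1\<close>
  must be algebraically independent: otherwise \<open>L\<^sub>0\<close> lies in the fraction field of a finite
  module over a polynomial ring in one variable, and a dimension count shows that any two
  elements of such a field are algebraically dependent. So \<open>k(x\<^sub>0, t\<^sub>1) \<cong> k(x, t\<^sub>1)\<close> as
  rational function fields, and this isomorphism extends to the quadratic extensions by the
  square roots \<open>t\<^sub>2\<close> of corresponding elements.\<close>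

lemma gen_field_is_subfield: "is_subfield (gen_field A)"
  unfolding gen_field_def is_subfield_def by auto

lemma gen_field_incl: "A \<subseteq> gen_field A"
  unfolding gen_field_def by auto

lemma gen_field_min: "is_subfield S \<Longrightarrow> A \<subseteq> S \<Longrightarrow> gen_field A \<subseteq> S"
  unfolding gen_field_def by auto

lemma gen_field_mono: "A \<subseteq> B \<Longrightarrow> gen_field A \<subseteq> gen_field B"
  unfolding gen_field_def by auto

context
  fixes S :: "'a::field set"
  assumes S: "is_subfield S"
begin

lemma subfield_0: "0 \<in> S"
  using S unfolding is_subfield_def by auto

lemma subfield_1: "1 \<in> S"
  using S unfolding is_subfield_def by auto

lemma subfield_add: "u \<in> S \<Longrightarrow> v \<in> S \<Longrightarrow> u + v \<in> S"
  using S unfolding is_subfield_def by auto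

lemma subfield_mult: "u \<in> S \<Longrightarrow> v \<in> S \<Longrightarrow> u * v \<in> S"
  using S unfolding is_subfield_def by auto

lemma subfield_uminus: "u \<in> S \<Longrightarrow> - u \<in> S"
  using S unfolding is_subfield_def by auto

lemma subfield_inverse: "u \<in> S \<Longrightarrow> inverse u \<in> S"
  using S unfolding is_subfield_def by auto

lemma subfield_diff: "u \<in> S \<Longrightarrow> v \<in> S \<Longrightarrow> u - v \<in> S"
  using subfield_add[of u "- v"] subfield_uminus[of v] by simp

lemma subfield_divide: "u \<in> S \<Longrightarrow> v \<in> S \<Longrightarrow> u / v \<in> S"
  using subfield_mult[of u "inverse v"] subfield_inverse[of v] by (simp add: divide_inverse)

lemma subfield_power: "u \<in> S \<Longrightarrow> u ^ n \<in> S"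
  by (induction n) (auto intro: subfield_1 subfield_mult)

lemma subfield_sum: "(\<And>i. i \<in> I \<Longrightarrow> g i \<in> S) \<Longrightarrow> sum g I \<in> S"
  by (induction I rule: infinite_finite_induct) (auto intro: subfield_0 subfield_add)

end

lemma subfield_of_fractions:
  fixes R :: "'a::field set"
  assumes "0 \<in> R" "1 \<in> R"
    and add: "\<And>u v. u \<in> R \<Longrightarrow> v \<in> R \<Longrightarrow> u + v \<in> R"
    and mult: "\<And>u v. u \<in> R \<Longrightarrow> v \<in> R \<Longrightarrow> u * v \<in> R"
    and uminus: "\<And>u. u \<in> R \<Longrightarrow> - u \<in> R"
  shows "is_subfield {p / q | p q. p \<in> R \<and> q \<in> R}"
  unfolding is_subfield_def
proof (intro conjI ballI)
  let ?F = "{p / q | p q. p \<in> R \<and> q \<in> R}"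
  have "(0::'a) = 0 / 1" by simp
  then show "0 \<in> ?F" using assms(1,2) by blast
  show "1 \<in> ?F" using assms(2) by (auto intro!: exI[of _ 1])
  fix u v assume "u \<in> ?F" "v \<in> ?F"
  then obtain p q p' q' where pq: "p \<in> R" "q \<in> R" "p' \<in> R" "q' \<in> R" "u = p / q" "v = p' / q'"
    by blast
  show "u * v \<in> ?F"
    using pq mult by (intro CollectI exI[of _ "p * p'"] exI[of _ "q * q'"]) simp
  show "u + v \<in> ?F"
  proof (cases "q = 0 \<or> q' = 0")
    case True
    then have "u + v = v \<or> u + v = u" using pq by auto
    then show ?thesis using \<open>u \<in> ?F\<close> \<open>v \<in> ?F\<close> by (elim disjE) simp_all
  next
    case False
    then have "u + v = (p * q' + p' * q) / (q * q')"
      using pq by (simp add: add_frac_eq)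
    then show ?thesis
      using pq add mult by blast
  qed
next
  fix u assume "u \<in> {p / q | p q. p \<in> R \<and> q \<in> R}"
  then obtain p q where pq: "p \<in> R" "q \<in> R" "u = p / q" by blast
  show "- u \<in> {p / q | p q. p \<in> R \<and> q \<in> R}"
    using pq uminus by (intro CollectI exI[of _ "- p"] exI[of _ q]) simp
  show "inverse u \<in> {p / q | p q. p \<in> R \<and> q \<in> R}"
    using pq by (intro CollectI exI[of _ q] exI[of _ p]) simp
qed

locale subfield_endo =
  fixes L :: "'a::field set" and \<sigma> :: "'a \<Rightarrow> 'a"
  assumes subfield: "is_subfield L"
    and hom_add: "u \<in> L \<Longrightarrow> v \<in> L \<Longrightarrow> \<sigma> (u + v) = \<sigma> u + \<sigma> v"
    and hom_mult: "u \<in> L \<Longrightarrow> v \<in> L \<Longrightarrow> \<sigma> (u * v) = \<sigma> u * \<sigma> v"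
    and hom_1: "\<sigma> 1 = 1"
begin

lemma hom_0: "\<sigma> 0 = 0"
  using hom_add[OF subfield_0 subfield_0, OF subfield subfield]
  by (metis add_0 add_cancel_right_right)

lemma hom_uminus: "u \<in> L \<Longrightarrow> \<sigma> (- u) = - \<sigma> u"
  using hom_add[of u "- u"] subfield_uminus[OF subfield, of u] hom_0
  by (simp add: eq_neg_iff_add_eq_0 add.commute)

lemma hom_diff: "u \<in> L \<Longrightarrow> v \<in> L \<Longrightarrow> \<sigma> (u - v) = \<sigma> u - \<sigma> v"
  using hom_add[of u "- v"] hom_uminus[of v] subfield_uminus[OF subfield, of v] by simp

lemma hom_inverse: "u \<in> L \<Longrightarrow> \<sigma> (inverse u) = inverse (\<sigma> u)"
proof (cases "u = 0")
  case False
  assume u: "u \<in> L"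
  have "\<sigma> u * \<sigma> (inverse u) = 1"
    using hom_mult[OF u subfield_inverse[OF subfield u]] False hom_1 by simp
  then show ?thesis by (simp add: inverse_unique)
qed (simp add: hom_0)

lemma hom_divide: "u \<in> L \<Longrightarrow> v \<in> L \<Longrightarrow> \<sigma> (u / v) = \<sigma> u / \<sigma> v"
  using hom_mult[of u "inverse v"] hom_inverse[of v] subfield_inverse[OF subfield, of v]
  by (simp add: divide_inverse)

lemma fixed_points_subfield: "is_subfield {u \<in> L. \<sigma> u = u}"
  using subfield hom_0 hom_1 hom_add hom_mult hom_uminus hom_inverse
  unfolding is_subfield_def by auto

end

lemma map_poly_add_hom:
  assumes "h 0 = 0" "\<And>a b. h (a + b) = h a + h b"
  shows "map_poly h (p + q) = map_poly h p + map_poly h q"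
  by (rule poly_eqI) (simp add: coeff_map_poly assms)

lemma map_poly_mult_hom:
  fixes h :: "'a::comm_semiring_0 \<Rightarrow> 'b::comm_semiring_0"
  assumes h0: "h 0 = 0" and h_add: "\<And>a b. h (a + b) = h a + h b"
    and h_mult: "\<And>a b. h (a * b) = h a * h b"
  shows "map_poly h (p * q) = map_poly h p * map_poly h q"
proof (rule poly_eqI)
  fix n
  have h_sum: "h (sum g A) = (\<Sum>a\<in>A. h (g a))" for g and A :: "nat set"
    by (induction A rule: infinite_finite_induct) (simp_all add: h0 h_add)
  show "coeff (map_poly h (p * q)) n = coeff (map_poly h p * map_poly h q) n"
    by (simp add: coeff_map_poly h0 coeff_mult h_sum h_mult)
qed

lemma poly_eq_sum_upto:
  fixes p :: "'a::comm_semiring_1 poly"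
  assumes "degree p \<le> N"
  shows "poly p x = (\<Sum>i\<le>N. coeff p i * x ^ i)"
  unfolding poly_altdef
  by (rule sum.mono_neutral_left) (use assms in \<open>auto simp: coeff_eq_0\<close>)

lemma coeff_homogenization_top:
  fixes A B :: "'a::idom poly"
  assumes "degree A = 2" "lead_coeff A = 1" "degree B \<le> 1"
  shows "coeff (\<Sum>i\<le>d. [:c i:] * A ^ i * B ^ (d - i)) (2 * d) = c d"
proof -
  have low_terms: "coeff ([:c i:] * A ^ i * B ^ (d - i)) (2 * d) = 0" if "i < d" for i
  proof (rule coeff_eq_0)
    have "degree ([:c i:] * A ^ i * B ^ (d - i)) \<le> degree ([:c i:] * A ^ i) + degree (B ^ (d - i))"
      by (rule degree_mult_le)
    also have "\<dots> \<le> degree (A ^ i) + degree (B ^ (d - i))"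
      by (simp add: degree_smult_le)
    also have "\<dots> \<le> 2 * i + (d - i)"
      using assms by (intro add_mono degree_power_le[THEN order.trans]) (auto simp: mult.commute)
    also have "\<dots> < 2 * d"
      using that by simp
    finally show "degree ([:c i:] * A ^ i * B ^ (d - i)) < 2 * d" .
  qed
  have "degree (A ^ d) = 2 * d"
    using assms by (metis degree_power_eq leading_coeff_0_iff mult.commute one_neq_zero)
  then have "coeff (A ^ d) (2 * d) = 1"
    using assms(2) by (metis lead_coeff_power power_one)
  have "coeff (\<Sum>i\<le>d. [:c i:] * A ^ i * B ^ (d - i)) (2 * d) =
      (\<Sum>i\<le>d. coeff ([:c i:] * A ^ i * B ^ (d - i)) (2 * d))"
    by (rule coeff_sum)
  also have "\<dots> = coeff ([:c d:] * A ^ d * B ^ (d - d)) (2 * d)"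
  proof -
    have "(\<Sum>i\<in>{..d} - {d}. coeff ([:c i:] * A ^ i * B ^ (d - i)) (2 * d)) = 0"
      by (intro sum.neutral ballI low_terms) auto
    then show ?thesis
      by (simp add: sum.remove[of "{..d}" d])
  qed
  also have "\<dots> = c d"
    using \<open>coeff (A ^ d) (2 * d) = 1\<close> by simp
  finally show ?thesis .
qed

locale field_embedding =
  fixes j :: "'k::field \<Rightarrow> 'l::field"
  assumes emb: "field_emb j"
begin

lemma j_add: "j (u + v) = j u + j v"
  using emb unfolding field_emb_def by auto

lemma j_mult: "j (u * v) = j u * j v"
  using emb unfolding field_emb_def by auto

lemma j_1 [simp]: "j 1 = 1"
  using emb unfolding field_emb_def by auto

lemma j_0 [simp]: "j 0 = 0"
  by (metis add_cancel_right_right j_add)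

lemma j_uminus: "j (- u) = - j u"
  using j_add[of u "- u"] by (simp add: eq_neg_iff_add_eq_0 add.commute)

lemma j_diff: "j (u - v) = j u - j v"
  using j_add[of u "- v"] j_uminus[of v] by simp

lemma j_inverse: "j (inverse u) = inverse (j u)"
proof (cases "u = 0")
  case False
  then have "j u * j (inverse u) = 1"
    using j_mult[of u "inverse u"] by simp
  then show ?thesis by (simp add: inverse_unique)
qed simp

lemma j_divide: "j (u / v) = j u / j v"
  by (simp add: divide_inverse j_mult j_inverse)

lemma j_power: "j (u ^ n) = j u ^ n"
  by (induction n) (simp_all add: j_mult)

lemma j_sum: "j (sum g A) = (\<Sum>a\<in>A. j (g a))"
  by (induction A rule: infinite_finite_induct) (simp_all add: j_add)

lemma j_eq_0_iff [simp]: "j u = 0 \<longleftrightarrow> u = 0"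
proof
  assume "j u = 0"
  then show "u = 0"
    using j_mult[of u "inverse u"] by (cases "u = 0") auto
qed simp

lemma j_numeral: "j (numeral n) = numeral n"
proof -
  have "j (of_nat m) = of_nat m" for m
    by (induction m) (simp_all add: j_add)
  then show ?thesis by (metis of_nat_numeral)
qed

lemmas j_simps = j_add j_mult j_uminus j_diff j_inverse j_divide j_power j_sum j_numeral

definition peval :: "'k poly \<Rightarrow> 'l \<Rightarrow> 'l" where
  "peval p u = poly (map_poly j p) u"

lemma peval_add [simp]: "peval (p + q) u = peval p u + peval q u"
  by (simp add: peval_def map_poly_add_hom j_add)

lemma peval_mult [simp]: "peval (p * q) u = peval p u * peval q u"
  by (simp add: peval_def map_poly_mult_hom j_add j_mult)

lemma peval_pCons [simp]: "peval (pCons c p) u = j c + u * peval p u"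
  by (simp add: peval_def map_poly_pCons)

lemma peval_0 [simp]: "peval 0 u = 0"
  by (simp add: peval_def)

lemma peval_1 [simp]: "peval 1 u = 1"
  by (simp add: peval_def)

lemma peval_uminus [simp]: "peval (- p) u = - peval p u"
  using peval_add[of p "- p" u] by (simp add: eq_neg_iff_add_eq_0 add.commute)

lemma peval_power [simp]: "peval (p ^ n) u = peval p u ^ n"
  by (induction n) simp_all

lemma peval_smult [simp]: "peval (smult c p) u = j c * peval p u"
proof -
  have "smult c p = [:c:] * p" by simp
  then show ?thesis by (simp del: mult_pCons_left)
qed

lemma peval_monom [simp]: "peval (monom c n) u = j c * u ^ n"
  by (simp add: peval_def map_poly_monom poly_monom)

lemma peval_sum_upto: "degree p \<le> N \<Longrightarrow> peval p u = (\<Sum>i\<le>N. j (coeff p i) * u ^ i)"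
  unfolding peval_def
  by (rule poly_eq_sum_upto[THEN trans]) (auto intro: le_trans[OF map_poly_degree_leq] simp: coeff_map_poly)

lemma peval_in_subfield:
  assumes S: "is_subfield S" and "range j \<subseteq> S" "u \<in> S"
  shows "peval p u \<in> S"
  using peval_sum_upto[of p "degree p" u] assms
  by (auto intro!: subfield_sum[OF S] subfield_mult[OF S] subfield_power[OF S])

text \<open>A bivariate polynomial over \<open>k\<close> is an element of \<open>k[X][Y]\<close>, i.e.\ of type
  \<open>'k poly poly\<close>; \<open>peval2 u v P\<close> substitutes \<open>X := u\<close>, \<open>Y := v\<close> after mapping the
  coefficients along \<open>j\<close>.\<close>

definition peval2 :: "'l \<Rightarrow> 'l \<Rightarrow> 'k poly poly \<Rightarrow> 'l" where
  "peval2 u v P = poly (map_poly (\<lambda>q. peval q u) P) v"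

lemma peval2_add [simp]: "peval2 u v (P + Q) = peval2 u v P + peval2 u v Q"
  by (simp add: peval2_def map_poly_add_hom)

lemma peval2_mult [simp]: "peval2 u v (P * Q) = peval2 u v P * peval2 u v Q"
  by (simp add: peval2_def map_poly_mult_hom)

lemma peval2_pCons [simp]: "peval2 u v (pCons q P) = peval q u + v * peval2 u v P"
  by (simp add: peval2_def map_poly_pCons)

lemma peval2_0 [simp]: "peval2 u v 0 = 0"
  by (simp add: peval2_def)

lemma peval2_1 [simp]: "peval2 u v 1 = 1"
  by (simp add: peval2_def)

lemma peval2_uminus [simp]: "peval2 u v (- P) = - peval2 u v P"
  using peval2_add[of u v P "- P"] by (simp add: eq_neg_iff_add_eq_0 add.commute)

lemma peval2_diff [simp]: "peval2 u v (P - Q) = peval2 u v P - peval2 u v Q"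
  using peval2_add[of u v P "- Q"] by simp

lemma peval2_power [simp]: "peval2 u v (P ^ n) = peval2 u v P ^ n"
  by (induction n) simp_all

lemma peval2_sum: "peval2 u v (sum g A) = (\<Sum>a\<in>A. peval2 u v (g a))"
  by (induction A rule: infinite_finite_induct) simp_all

lemma peval2_monom [simp]: "peval2 u v (monom q n) = peval q u * v ^ n"
  by (simp add: peval2_def map_poly_monom poly_monom)

lemma peval2_sum_upto:
  "degree P \<le> N \<Longrightarrow> peval2 u v P = (\<Sum>k\<le>N. peval (coeff P k) u * v ^ k)"
  unfolding peval2_def
  by (rule poly_eq_sum_upto[THEN trans]) (auto intro: le_trans[OF map_poly_degree_leq] simp: coeff_map_poly)

lemma peval2_in_subfield:
  assumes S: "is_subfield S" and "range j \<subseteq> S" "u \<in> S" "v \<in> S"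
  shows "peval2 u v P \<in> S"
  using peval2_sum_upto[of P "degree P" u v] assms peval_in_subfield[OF S]
  by (auto intro!: subfield_sum[OF S] subfield_mult[OF S] subfield_power[OF S])

definition indep_pair :: "'l \<Rightarrow> 'l \<Rightarrow> bool" where
  "indep_pair u v \<longleftrightarrow> (\<forall>P. peval2 u v P = 0 \<longrightarrow> P = 0)"

lemma indep_pair_peval2_nonzero: "indep_pair u v \<Longrightarrow> P \<noteq> 0 \<Longrightarrow> peval2 u v P \<noteq> 0"
  unfolding indep_pair_def by blast

end

lemma alg_indep_pairD:
  fixes u v :: "'a::field"
  assumes indep: "alg_indep F {u, v}" and "u \<noteq> v" and "finite I"
    and coeffs: "\<forall>p\<in>I. c p \<in> F"
    and relation: "(\<Sum>p\<in>I. c p * (u ^ fst p * v ^ snd p)) = 0"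
  shows "\<forall>p\<in>I. c p = 0"
proof -
  define mon :: "nat \<times> nat \<Rightarrow> 'a \<Rightarrow> nat"
    where "mon p = (\<lambda>b. if b = u then fst p else if b = v then snd p else 0)" for p
  have mon_uv: "mon p u = fst p" "mon p v = snd p" for p
    using \<open>u \<noteq> v\<close> by (auto simp: mon_def)
  have inj: "inj_on mon I"
    by (rule inj_onI) (metis mon_uv prod.collapse)
  define c' where "c' m = c (m u, m v)" for m :: "'a \<Rightarrow> nat"
  have c'_mon: "c' (mon p) = c p" for p
    by (simp add: c'_def mon_uv)
  have "(\<Sum>m\<in>mon ` I. c' m * (\<Prod>b\<in>{u, v}. b ^ m b)) = (\<Sum>p\<in>I. c p * (u ^ fst p * v ^ snd p))"
    using \<open>u \<noteq> v\<close> by (simp add: sum.reindex[OF inj] c'_mon mon_uv)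
  with relation have "(\<Sum>m\<in>mon ` I. c' m * (\<Prod>b\<in>{u, v}. b ^ m b)) = 0"
    by simp
  moreover have "\<forall>m\<in>mon ` I. \<forall>b. b \<notin> {u, v} \<longrightarrow> m b = 0"
    by (auto simp: mon_def)
  moreover have "\<forall>m\<in>mon ` I. c' m \<in> F"
    using coeffs by (auto simp: c'_mon)
  ultimately have "\<forall>m\<in>mon ` I. c' m = 0"
    using indep \<open>finite I\<close> unfolding alg_indep_def by blast
  then show ?thesis by (auto simp: c'_mon)
qed

context field_embedding
begin

lemma indep_pair_if_alg_indep:
  assumes indep: "alg_indep F {u, v}" and "u \<noteq> v" and "range j \<subseteq> F"
  shows "indep_pair u v"
  unfolding indep_pair_def
proof (intro allI impI)
  fix P assume P_root: "peval2 u v P = 0"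
  define N where "N = degree P"
  define D where "D = Max ((\<lambda>k. degree (coeff P k)) ` {..N})"
  have deg_coeff: "degree (coeff P k) \<le> D" if "k \<le> N" for k
    unfolding D_def using that by (intro Max_ge) auto
  define c where "c p = j (coeff (coeff P (snd p)) (fst p))" for p
  have "peval2 u v P = (\<Sum>k\<le>N. \<Sum>i\<le>D. c (i, k) * (u ^ i * v ^ k))"
    by (simp add: peval2_sum_upto[of P N] N_def peval_sum_upto[OF deg_coeff]
        sum_distrib_right c_def mult.assoc)
  also have "\<dots> = (\<Sum>p\<in>{..D} \<times> {..N}. c p * (u ^ fst p * v ^ snd p))"
    by (subst sum.swap) (simp add: sum.cartesian_product case_prod_unfold)
  finally have "\<forall>p\<in>{..D} \<times> {..N}. c p = 0"
    using P_root assms by (intro alg_indep_pairD[OF indep]) (auto simp: c_def)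
  then have "coeff (coeff P k) i = 0" for k i
    using deg_coeff[of k] by (cases "k \<le> N"; cases "i \<le> D")
      (auto simp: c_def coeff_eq_0 N_def)
  then show "P = 0"
    by (metis leading_coeff_0_iff)
qed

lemma alg_indep_if_indep_pair:
  assumes indep: "indep_pair u v" and "u \<noteq> v"
  shows "alg_indep (range j) {u, v}"
  unfolding alg_indep_def
proof (intro conjI allI impI)
  fix M :: "('l \<Rightarrow> nat) set" and c
  assume "finite M \<and> (\<forall>m\<in>M. \<forall>b. b \<notin> {u, v} \<longrightarrow> m b = 0) \<and> (\<forall>m\<in>M. c m \<in> range j) \<and>
      (\<Sum>m\<in>M. c m * (\<Prod>b\<in>{u, v}. b ^ m b)) = 0"
  then have fin: "finite M" and supp: "\<forall>m\<in>M. \<forall>b. b \<notin> {u, v} \<longrightarrow> m b = 0"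
    and c_j: "\<forall>m\<in>M. c m \<in> range j" and relation: "(\<Sum>m\<in>M. c m * (\<Prod>b\<in>{u, v}. b ^ m b)) = 0"
    by auto
  define h where "h m = inv j (c m)" for m
  have j_h: "j (h m) = c m" if "m \<in> M" for m
    using c_j that unfolding h_def by (simp add: f_inv_into_f)
  define P where "P = (\<Sum>m\<in>M. monom (monom (h m) (m u)) (m v))"
  have "peval2 u v P = (\<Sum>m\<in>M. c m * (\<Prod>b\<in>{u, v}. b ^ m b))"
    unfolding P_def peval2_sum using \<open>u \<noteq> v\<close> by (intro sum.cong refl) (simp add: j_h mult.assoc)
  then have "P = 0"
    using relation indep unfolding indep_pair_def by simp
  have monomial_eq: "m v = m0 v \<and> m u = m0 u \<longleftrightarrow> m = m0" if "m \<in> M" "m0 \<in> M" for m m0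
  proof
    assume uv_eq: "m v = m0 v \<and> m u = m0 u"
    show "m = m0"
    proof
      fix b
      show "m b = m0 b"
      proof (cases "b \<in> {u, v}")
        case False
        then have "m b = 0" "m0 b = 0"
          using supp that by blast+
        then show ?thesis by simp
      qed (use uv_eq in auto)
    qed
  qed simp
  show "\<forall>m\<in>M. c m = 0"
  proof
    fix m0 assume "m0 \<in> M"
    have "coeff (coeff P (m0 v)) (m0 u) = (\<Sum>m\<in>M. if m = m0 then h m else 0)"
      unfolding P_def coeff_sum using monomial_eq \<open>m0 \<in> M\<close>
      by (intro sum.cong refl) (auto simp: coeff_monom)
    also have "\<dots> = h m0"
      using fin \<open>m0 \<in> M\<close> by simp
    finally show "c m0 = 0"
      using \<open>P = 0\<close> j_h[OF \<open>m0 \<in> M\<close>] by simp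
  qed
qed simp

section \<open>The rational function field \<open>k(u, v)\<close>\<close>

definition rat_field :: "'l \<Rightarrow> 'l \<Rightarrow> 'l set" where
  "rat_field u v = {peval2 u v P / peval2 u v Q | P Q. True}"

lemma rat_fieldI: "peval2 u v P / peval2 u v Q \<in> rat_field u v"
  unfolding rat_field_def by blast

lemma rat_field_subfield: "is_subfield (rat_field u v)"
proof -
  have "rat_field u v = {p / q | p q. p \<in> range (peval2 u v) \<and> q \<in> range (peval2 u v)}"
    unfolding rat_field_def by blast
  also have "is_subfield \<dots>"
    by (rule subfield_of_fractions) (auto intro: range_eqI[of _ _ 0] range_eqI[of _ _ 1]
        peval2_add[symmetric] peval2_mult[symmetric] peval2_uminus[symmetric])
  finally show ?thesis .
qed

lemma gen_field_eq_rat_field: "gen_field (range j \<union> {u, v}) = rat_field u v"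
proof
  have "j c \<in> rat_field u v" for c
    using rat_fieldI[of u v "[:[:c:]:]" 1] by simp
  moreover have "u \<in> rat_field u v" "v \<in> rat_field u v"
    using rat_fieldI[of u v "[:[:0, 1:]:]" 1] rat_fieldI[of u v "[:0, 1:]" 1] by simp_all
  ultimately have "range j \<union> {u, v} \<subseteq> rat_field u v"
    by blast
  then show "gen_field (range j \<union> {u, v}) \<subseteq> rat_field u v"
    by (rule gen_field_min[OF rat_field_subfield])
  have "range j \<union> {u, v} \<subseteq> gen_field (range j \<union> {u, v})"
    by (rule gen_field_incl)
  then show "rat_field u v \<subseteq> gen_field (range j \<union> {u, v})"
    unfolding rat_field_def
    by (auto intro!: subfield_divide[OF gen_field_is_subfield] peval2_in_subfield[OF gen_field_is_subfield])
qed

lemma rat_field_elem: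
  assumes "e \<in> rat_field u v"
  obtains P Q where "Q \<noteq> 0" "e = peval2 u v P / peval2 u v Q"
proof -
  obtain P Q where e: "e = peval2 u v P / peval2 u v Q"
    using assms unfolding rat_field_def by auto
  show ?thesis
  proof (cases "Q = 0")
    case True
    then show ?thesis using e that[of 1 0] by simp
  qed (use e that in auto)
qed

lemma peval2_fraction_eq_iff:
  assumes "indep_pair u v" "Q \<noteq> 0" "Q' \<noteq> 0"
  shows "peval2 u v P / peval2 u v Q = peval2 u v P' / peval2 u v Q' \<longleftrightarrow> P * Q' = P' * Q"
proof -
  have "peval2 u v Q \<noteq> 0" "peval2 u v Q' \<noteq> 0"
    using assms indep_pair_peval2_nonzero by auto
  then have "peval2 u v P / peval2 u v Q = peval2 u v P' / peval2 u v Q' \<longleftrightarrow>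
      peval2 u v (P * Q' - P' * Q) = 0"
    by (simp add: field_simps)
  also have "\<dots> \<longleftrightarrow> P * Q' - P' * Q = 0"
    using assms(1) unfolding indep_pair_def by (metis peval2_0)
  finally show ?thesis by simp
qed

end

section \<open>Quadratic extensions\<close>

definition quad_ext :: "'a::field set \<Rightarrow> 'a \<Rightarrow> 'a set" where
  "quad_ext E z = {p + z * q | p q. p \<in> E \<and> q \<in> E}"

lemma quad_extI: "p \<in> E \<Longrightarrow> q \<in> E \<Longrightarrow> p + z * q \<in> quad_ext E z"
  unfolding quad_ext_def by blast

lemma quad_extE:
  assumes "e \<in> quad_ext E z"
  obtains p q where "p \<in> E" "q \<in> E" "e = p + z * q"
  using assms unfolding quad_ext_def by blast

lemma quad_ext_coords_unique:
  assumes S: "is_subfield E" and "z \<notin> E" and "p \<in> E" "q \<in> E" "p' \<in> E" "q' \<in> E"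
    and eq: "p + z * q = p' + z * q'"
  shows "p = p' \<and> q = q'"
proof (cases "q = q'")
  case False
  then have "z = (p' - p) / (q - q')"
    using eq by (simp add: field_simps)
  then have "z \<in> E"
    using assms by (simp add: subfield_divide[OF S] subfield_diff[OF S])
  with \<open>z \<notin> E\<close> show ?thesis ..
qed (use eq in simp)

lemma subfield_subset_quad_ext: "is_subfield E \<Longrightarrow> E \<subseteq> quad_ext E z"
  using quad_extI[of _ E 0 z] subfield_0 by force

lemma generator_in_quad_ext: "is_subfield E \<Longrightarrow> z \<in> quad_ext E z"
  using quad_extI[of 0 E 1 z] subfield_0 subfield_1 by force

lemma quad_ext_minimal: "is_subfield S \<Longrightarrow> E \<subseteq> S \<Longrightarrow> z \<in> S \<Longrightarrow> quad_ext E z \<subseteq> S"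
  unfolding quad_ext_def by (auto intro: subfield_add subfield_mult)

lemma quad_ext_mult:
  assumes S: "is_subfield E" and "z * z \<in> E" "p \<in> E" "q \<in> E" "p' \<in> E" "q' \<in> E"
  shows "(p + z * q) * (p' + z * q') \<in> quad_ext E z"
proof -
  have "(p + z * q) * (p' + z * q') = (p * p' + (z * z) * (q * q')) + z * (p * q' + q * p')"
    by (simp add: algebra_simps)
  then show ?thesis
    using assms by (metis quad_extI subfield_add subfield_mult)
qed

lemma quad_ext_norm_nonzero:
  assumes S: "is_subfield E" and "z \<notin> E" and "p \<in> E" "q \<in> E" "p \<noteq> 0 \<or> q \<noteq> 0"
  shows "p * p - z * z * (q * q) \<noteq> 0"
proof
  assume norm: "p * p - z * z * (q * q) = 0"
  show False
  proof (cases "q = 0")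
    case False
    then have "(p / q - z) * (p / q + z) = 0"
      using norm by (simp add: field_simps)
    then have "z = p / q \<or> z = - (p / q)"
      by (auto simp: eq_neg_iff_add_eq_0 add.commute)
    moreover have "p / q \<in> E" "- (p / q) \<in> E"
      using assms by (auto intro: subfield_divide[OF S] subfield_uminus[OF S])
    ultimately show False
      using \<open>z \<notin> E\<close> by auto
  qed (use assms norm in simp)
qed

lemma quad_ext_inverse:
  assumes S: "is_subfield E" and "z \<notin> E" "z * z \<in> E" "p \<in> E" "q \<in> E"
  shows "inverse (p + z * q) \<in> quad_ext E z"
proof (cases "p = 0 \<and> q = 0")
  case True
  then show ?thesis using quad_extI[of 0 E 0 z] subfield_0[OF S] by simp
next
  case False
  define n where "n = p * p - z * z * (q * q)"
  have "n \<noteq> 0"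
    unfolding n_def using assms False by (intro quad_ext_norm_nonzero[OF S]) auto
  have "n \<in> E"
    unfolding n_def
    by (rule subfield_diff[OF S subfield_mult[OF S assms(4,4)] subfield_mult[OF S assms(3) subfield_mult[OF S assms(5,5)]]])
  have prod: "(p + z * q) * (p - z * q) = n"
    unfolding n_def by (simp add: algebra_simps)
  with \<open>n \<noteq> 0\<close> have "p + z * q \<noteq> 0"
    by auto
  with prod \<open>n \<noteq> 0\<close> have "inverse (p + z * q) = (p - z * q) / n"
    by (auto simp: field_simps)
  then have "inverse (p + z * q) = p / n + z * (- q / n)"
    by (simp add: diff_divide_distrib)
  moreover have "p / n \<in> E" "- q / n \<in> E"
    using assms \<open>n \<in> E\<close> by (auto intro!: subfield_divide[OF S] subfield_uminus[OF S])
  ultimately show ?thesis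
    by (metis quad_extI)
qed

lemma quad_ext_subfield:
  assumes S: "is_subfield E" and "z * z \<in> E"
  shows "is_subfield (quad_ext E z)"
proof (cases "z \<in> E")
  case True
  then have "quad_ext E z = E"
    using quad_ext_minimal[OF S] subfield_subset_quad_ext[OF S] by blast
  then show ?thesis using S by simp
next
  case False
  show ?thesis
    unfolding is_subfield_def
  proof (intro conjI ballI)
    show "0 \<in> quad_ext E z" "1 \<in> quad_ext E z"
      using subfield_subset_quad_ext[OF S] subfield_0[OF S] subfield_1[OF S] by auto
    fix a b assume "a \<in> quad_ext E z" "b \<in> quad_ext E z"
    then obtain p q p' q' where pq: "p \<in> E" "q \<in> E" "p' \<in> E" "q' \<in> E"
      and ab: "a = p + z * q" "b = p' + z * q'"
      by (metis quad_extE)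
    have "a + b = (p + p') + z * (q + q')"
      unfolding ab by (simp add: algebra_simps)
    then show "a + b \<in> quad_ext E z"
      using pq by (simp add: quad_extI subfield_add[OF S])
    show "a * b \<in> quad_ext E z"
      unfolding ab by (rule quad_ext_mult) (use assms pq in auto)
  next
    fix a assume "a \<in> quad_ext E z"
    then obtain p q where pq: "p \<in> E" "q \<in> E" "a = p + z * q"
      by (rule quad_extE)
    show "- a \<in> quad_ext E z"
      using quad_extI[OF subfield_uminus[OF S pq(1)] subfield_uminus[OF S pq(2)], of z] pq(3)
      by simp
    show "inverse a \<in> quad_ext E z"
      using quad_ext_inverse[OF S False] assms pq by simp
  qed
qed

lemma algebraic_over_quad_ext:
  assumes S: "is_subfield E" and "z * z \<in> E" and "e \<in> quad_ext E z"
  shows "algebraic_over E e"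
proof -
  obtain p q where pq: "p \<in> E" "q \<in> E" "e = p + z * q"
    using assms(3) by (rule quad_extE)
  define P where "P = [:p * p - z * z * (q * q), - (p + p), 1:]"
  have "p * p - z * z * (q * q) \<in> E" "- (p + p) \<in> E"
    using pq assms(2) by (metis subfield_diff[OF S] subfield_mult[OF S], metis subfield_uminus[OF S] subfield_add[OF S])
  then have "coeff P i \<in> E" for i
    using subfield_0[OF S] subfield_1[OF S] by (simp add: P_def coeff_pCons split: nat.split)
  moreover have "poly P e = 0"
    unfolding P_def pq(3) by (simp add: algebra_simps)
  ultimately show ?thesis
    unfolding algebraic_over_def by (metis P_def pCons_eq_0_iff one_neq_zero)
qed

context field_embedding
begin

lemma peval2_smult [simp]: "peval2 u v (smult q P) = peval q u * peval2 u v P"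
proof -
  have "smult q P = [:q:] * P" by simp
  then show ?thesis by (simp del: mult_pCons_left)
qed

lemma square_eq_fraction:
  assumes "a \<noteq> 0" and "j a * z ^ 2 = v ^ 2 - peval f u"
  shows "z * z = peval2 u v [:- f, 0, 1:] / peval2 u v [:[:a:]:]"
  using assms by (simp add: field_simps power2_eq_square)

lemma square_in_rat_field:
  assumes "a \<noteq> 0" and "j a * z ^ 2 = v ^ 2 - peval f u"
  shows "z * z \<in> rat_field u v"
  unfolding square_eq_fraction[OF assms] by (rule rat_fieldI)

text \<open>If \<open>z = P/Q\<close> then \<open>a P\<^sup>2 = (Y\<^sup>2 - f) Q\<^sup>2\<close> in \<open>k[X][Y]\<close>; comparing the leading
  coefficients of the leading coefficients makes \<open>a\<close> a square in \<open>k\<close>.\<close>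

lemma square_root_not_in_rat_field:
  assumes indep: "indep_pair u v" and nonsquare: "\<forall>b. b * b \<noteq> a"
    and z: "j a * z ^ 2 = v ^ 2 - peval f u"
  shows "z \<notin> rat_field u v"
proof
  assume "z \<in> rat_field u v"
  then obtain P Q where "Q \<noteq> 0" and z_eq: "z = peval2 u v P / peval2 u v Q"
    by (rule rat_field_elem)
  have "a \<noteq> 0"
    using nonsquare by (metis mult_zero_left)
  define G where "G = [:- f, 0, 1:]"
  have "peval2 u v Q \<noteq> 0"
    using indep_pair_peval2_nonzero[OF indep \<open>Q \<noteq> 0\<close>] .
  with z z_eq have "peval2 u v ([:[:a:]:] * P ^ 2 - G * Q ^ 2) = 0"
    by (simp add: G_def field_simps power2_eq_square)
  then have "[:[:a:]:] * P ^ 2 - G * Q ^ 2 = 0"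
    using indep unfolding indep_pair_def by blast
  then have PQ: "[:[:a:]:] * P ^ 2 = G * Q ^ 2"
    by simp
  have "G \<noteq> 0" "lead_coeff G = 1"
    by (simp_all add: G_def)
  with PQ \<open>Q \<noteq> 0\<close> have "P \<noteq> 0"
    by auto
  from PQ have "lead_coeff ([:[:a:]:] * P ^ 2) = lead_coeff (G * Q ^ 2)"
    by simp
  then have "smult a (lead_coeff P ^ 2) = lead_coeff Q ^ 2"
    using \<open>a \<noteq> 0\<close> \<open>lead_coeff G = 1\<close> by (simp add: lead_coeff_mult lead_coeff_power)
  then have "a * lead_coeff (lead_coeff P) ^ 2 = lead_coeff (lead_coeff Q) ^ 2"
    by (metis \<open>a \<noteq> 0\<close> lead_coeff_power lead_coeff_smult)
  then have "(lead_coeff (lead_coeff Q) / lead_coeff (lead_coeff P)) *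
      (lead_coeff (lead_coeff Q) / lead_coeff (lead_coeff P)) = a"
    using \<open>P \<noteq> 0\<close> by (simp add: field_simps power2_eq_square)
  then show False
    using nonsquare by blast
qed

lemma quad_ext_rat_field:
  assumes "z * z \<in> rat_field u v"
  shows "quad_ext (rat_field u v) z = gen_field (range j \<union> {u, v, z})"
proof
  have S: "is_subfield (rat_field u v)"
    by (rule rat_field_subfield)
  show "quad_ext (rat_field u v) z \<subseteq> gen_field (range j \<union> {u, v, z})"
  proof (rule quad_ext_minimal[OF gen_field_is_subfield])
    show "rat_field u v \<subseteq> gen_field (range j \<union> {u, v, z})"
      unfolding gen_field_eq_rat_field[symmetric] by (rule gen_field_mono) auto
    show "z \<in> gen_field (range j \<union> {u, v, z})"
      using gen_field_incl[of "range j \<union> {u, v, z}"] by auto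
  qed
  show "gen_field (range j \<union> {u, v, z}) \<subseteq> quad_ext (rat_field u v) z"
  proof (rule gen_field_min[OF quad_ext_subfield[OF S assms]])
    have "range j \<union> {u, v} \<subseteq> rat_field u v"
      unfolding gen_field_eq_rat_field[symmetric] by (rule gen_field_incl)
    then have "range j \<union> {u, v} \<subseteq> quad_ext (rat_field u v) z"
      using subfield_subset_quad_ext[OF S, of z] by (rule order.trans)
    then show "range j \<union> {u, v, z} \<subseteq> quad_ext (rat_field u v) z"
      using generator_in_quad_ext[OF S, of z] by auto
  qed
qed

text \<open>For \<open>t = (v + f(u)/v)/2\<close>, clearing denominators in \<open>Q(u, t) = 0\<close> gives a polynomial
  relation between \<open>u\<close> and \<open>v\<close> whose \<open>Y\<^bsup>2 deg Q\<^esup>\<close>-coefficient is the leading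
  coefficient of \<open>Q\<close>.\<close>

lemma indep_pair_trace:
  assumes indep: "indep_pair u v" and t: "2 * v * t = v ^ 2 + peval f u"
  shows "indep_pair u t"
  unfolding indep_pair_def
proof (intro allI impI, rule ccontr)
  fix Q assume Q_root: "peval2 u t Q = 0" and "Q \<noteq> 0"
  define d where "d = degree Q"
  define A :: "'k poly poly" where "A = [:f, 0, 1:]"
  define B :: "'k poly poly" where "B = [:0, [:2:]:]"
  define P where "P = (\<Sum>i\<le>d. [:coeff Q i:] * A ^ i * B ^ (d - i))"
  have A_eval: "peval2 u v A = 2 * v * t" and B_eval: "peval2 u v B = 2 * v"
    using t by (simp_all add: A_def B_def power2_eq_square j_numeral)
  have "peval2 u v P = (\<Sum>i\<le>d. peval (coeff Q i) u * ((2 * v) ^ d * t ^ i))"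
    unfolding P_def peval2_sum
  proof (intro sum.cong refl)
    fix i assume "i \<in> {..d}"
    have "peval2 u v ([:coeff Q i:] * A ^ i * B ^ (d - i)) =
        peval (coeff Q i) u * ((2 * v * t) ^ i * (2 * v) ^ (d - i))"
      by (simp add: A_eval B_eval)
    also have "(2 * v * t) ^ i * (2 * v) ^ (d - i) = (2 * v) ^ d * t ^ i"
      using \<open>i \<in> {..d}\<close> by (simp add: power_mult_distrib power_add[symmetric] algebra_simps)
    finally show "peval2 u v ([:coeff Q i:] * A ^ i * B ^ (d - i)) = peval (coeff Q i) u * ((2 * v) ^ d * t ^ i)" .
  qed
  also have "\<dots> = (2 * v) ^ d * peval2 u t Q"
    by (simp add: peval2_sum_upto[of Q d] d_def sum_distrib_left algebra_simps)
  finally have "P = 0"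
    using Q_root indep unfolding indep_pair_def by simp
  moreover have "coeff P (2 * d) = lead_coeff Q"
    unfolding P_def d_def by (rule coeff_homogenization_top) (simp_all add: A_def B_def)
  ultimately show False
    using \<open>Q \<noteq> 0\<close> by simp
qed

end

definition is_field_iso :: "('a::field \<Rightarrow> 'b::field) \<Rightarrow> 'a set \<Rightarrow> 'b set \<Rightarrow> bool" where
  "is_field_iso \<phi> A B \<longleftrightarrow> bij_betw \<phi> A B \<and>
     (\<forall>u\<in>A. \<forall>v\<in>A. \<phi> (u + v) = \<phi> u + \<phi> v \<and> \<phi> (u * v) = \<phi> u * \<phi> v)"

lemma k_iso_iff: "k_iso j A i B \<longleftrightarrow> (\<exists>\<phi>. is_field_iso \<phi> A B \<and> (\<forall>c. \<phi> (j c) = i c))"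
  unfolding k_iso_def is_field_iso_def by blast

locale two_field_embeddings = J: field_embedding j + I: field_embedding i
  for j :: "'k::field \<Rightarrow> 'l::field" and i :: "'k \<Rightarrow> 'o::field"
begin

definition rat_field_map :: "'l \<Rightarrow> 'l \<Rightarrow> 'o \<Rightarrow> 'o \<Rightarrow> 'l \<Rightarrow> 'o" where
  "rat_field_map u1 v1 u2 v2 e =
    (let PQ = (SOME PQ. snd PQ \<noteq> 0 \<and> e = J.peval2 u1 v1 (fst PQ) / J.peval2 u1 v1 (snd PQ))
     in I.peval2 u2 v2 (fst PQ) / I.peval2 u2 v2 (snd PQ))"

context
  fixes u1 v1 :: 'l and u2 v2 :: 'o
  assumes indep1: "J.indep_pair u1 v1" and indep2: "I.indep_pair u2 v2"
begin

lemma rat_field_map_fraction: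
  assumes "Q \<noteq> 0"
  shows "rat_field_map u1 v1 u2 v2 (J.peval2 u1 v1 P / J.peval2 u1 v1 Q) = I.peval2 u2 v2 P / I.peval2 u2 v2 Q"
proof -
  let ?e = "J.peval2 u1 v1 P / J.peval2 u1 v1 Q"
  define PQ where "PQ = (SOME PQ. snd PQ \<noteq> 0 \<and> ?e = J.peval2 u1 v1 (fst PQ) / J.peval2 u1 v1 (snd PQ))"
  have "snd PQ \<noteq> 0 \<and> ?e = J.peval2 u1 v1 (fst PQ) / J.peval2 u1 v1 (snd PQ)"
    unfolding PQ_def by (rule someI[of _ "(P, Q)"]) (simp add: assms)
  then have "snd PQ \<noteq> 0" and "P * snd PQ = fst PQ * Q"
    using J.peval2_fraction_eq_iff[OF indep1 assms] by auto
  then have "I.peval2 u2 v2 P / I.peval2 u2 v2 Q = I.peval2 u2 v2 (fst PQ) / I.peval2 u2 v2 (snd PQ)"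
    using I.peval2_fraction_eq_iff[OF indep2 assms] by simp
  then show ?thesis
    unfolding rat_field_map_def PQ_def[symmetric] Let_def by simp
qed

lemma rat_field_map_add:
  assumes "a \<in> J.rat_field u1 v1" "b \<in> J.rat_field u1 v1"
  shows "rat_field_map u1 v1 u2 v2 (a + b) = rat_field_map u1 v1 u2 v2 a + rat_field_map u1 v1 u2 v2 b"
proof -
  obtain P Q where "Q \<noteq> 0" and a: "a = J.peval2 u1 v1 P / J.peval2 u1 v1 Q"
    using assms(1) by (rule J.rat_field_elem)
  obtain P' Q' where "Q' \<noteq> 0" and b: "b = J.peval2 u1 v1 P' / J.peval2 u1 v1 Q'"
    using assms(2) by (rule J.rat_field_elem)
  have nonzero: "J.peval2 u1 v1 Q \<noteq> 0" "J.peval2 u1 v1 Q' \<noteq> 0"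
    "I.peval2 u2 v2 Q \<noteq> 0" "I.peval2 u2 v2 Q' \<noteq> 0"
    using \<open>Q \<noteq> 0\<close> \<open>Q' \<noteq> 0\<close> J.indep_pair_peval2_nonzero[OF indep1]
      I.indep_pair_peval2_nonzero[OF indep2] by blast+
  have "a + b = J.peval2 u1 v1 (P * Q' + P' * Q) / J.peval2 u1 v1 (Q * Q')"
    using nonzero unfolding a b by (simp add: add_frac_eq)
  moreover have "Q * Q' \<noteq> 0"
    using \<open>Q \<noteq> 0\<close> \<open>Q' \<noteq> 0\<close> by simp
  ultimately have "rat_field_map u1 v1 u2 v2 (a + b) = I.peval2 u2 v2 (P * Q' + P' * Q) / I.peval2 u2 v2 (Q * Q')"
    by (simp only: rat_field_map_fraction not_False_eq_True)
  also have "\<dots> = rat_field_map u1 v1 u2 v2 a + rat_field_map u1 v1 u2 v2 b"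
    using nonzero \<open>Q \<noteq> 0\<close> \<open>Q' \<noteq> 0\<close> unfolding a b by (simp add: rat_field_map_fraction add_frac_eq)
  finally show ?thesis .
qed

lemma rat_field_map_mult:
  assumes "a \<in> J.rat_field u1 v1" "b \<in> J.rat_field u1 v1"
  shows "rat_field_map u1 v1 u2 v2 (a * b) = rat_field_map u1 v1 u2 v2 a * rat_field_map u1 v1 u2 v2 b"
proof -
  obtain P Q where "Q \<noteq> 0" and a: "a = J.peval2 u1 v1 P / J.peval2 u1 v1 Q"
    using assms(1) by (rule J.rat_field_elem)
  obtain P' Q' where "Q' \<noteq> 0" and b: "b = J.peval2 u1 v1 P' / J.peval2 u1 v1 Q'"
    using assms(2) by (rule J.rat_field_elem)
  have "a * b = J.peval2 u1 v1 (P * P') / J.peval2 u1 v1 (Q * Q')"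
    unfolding a b by simp
  moreover have "Q * Q' \<noteq> 0"
    using \<open>Q \<noteq> 0\<close> \<open>Q' \<noteq> 0\<close> by simp
  ultimately have "rat_field_map u1 v1 u2 v2 (a * b) = I.peval2 u2 v2 (P * P') / I.peval2 u2 v2 (Q * Q')"
    by (simp only: rat_field_map_fraction not_False_eq_True)
  also have "\<dots> = rat_field_map u1 v1 u2 v2 a * rat_field_map u1 v1 u2 v2 b"
    using \<open>Q \<noteq> 0\<close> \<open>Q' \<noteq> 0\<close> unfolding a b by (simp add: rat_field_map_fraction)
  finally show ?thesis .
qed

lemma rat_field_map_bij: "bij_betw (rat_field_map u1 v1 u2 v2) (J.rat_field u1 v1) (I.rat_field u2 v2)"
  unfolding bij_betw_def
proof
  show "inj_on (rat_field_map u1 v1 u2 v2) (J.rat_field u1 v1)"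
  proof (rule inj_onI)
    fix a b assume "a \<in> J.rat_field u1 v1" "b \<in> J.rat_field u1 v1"
      and eq: "rat_field_map u1 v1 u2 v2 a = rat_field_map u1 v1 u2 v2 b"
    obtain P Q where "Q \<noteq> 0" and a: "a = J.peval2 u1 v1 P / J.peval2 u1 v1 Q"
      using \<open>a \<in> J.rat_field u1 v1\<close> by (rule J.rat_field_elem)
    obtain P' Q' where "Q' \<noteq> 0" and b: "b = J.peval2 u1 v1 P' / J.peval2 u1 v1 Q'"
      using \<open>b \<in> J.rat_field u1 v1\<close> by (rule J.rat_field_elem)
    from eq \<open>Q \<noteq> 0\<close> \<open>Q' \<noteq> 0\<close> show "a = b"
      unfolding a b
      by (simp add: rat_field_map_fraction I.peval2_fraction_eq_iff[OF indep2]
          J.peval2_fraction_eq_iff[OF indep1])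
  qed
  show "rat_field_map u1 v1 u2 v2 ` J.rat_field u1 v1 = I.rat_field u2 v2"
  proof safe
    fix a assume "a \<in> J.rat_field u1 v1"
    then obtain P Q where "Q \<noteq> 0" "a = J.peval2 u1 v1 P / J.peval2 u1 v1 Q"
      by (rule J.rat_field_elem)
    then show "rat_field_map u1 v1 u2 v2 a \<in> I.rat_field u2 v2"
      by (simp add: rat_field_map_fraction I.rat_fieldI)
  next
    fix e assume "e \<in> I.rat_field u2 v2"
    then obtain P Q where "Q \<noteq> 0" "e = I.peval2 u2 v2 P / I.peval2 u2 v2 Q"
      by (rule I.rat_field_elem)
    then have "e = rat_field_map u1 v1 u2 v2 (J.peval2 u1 v1 P / J.peval2 u1 v1 Q)"
      by (simp add: rat_field_map_fraction)
    then show "e \<in> rat_field_map u1 v1 u2 v2 ` J.rat_field u1 v1"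
      using J.rat_fieldI by blast
  qed
qed

lemma rat_field_map_iso: "is_field_iso (rat_field_map u1 v1 u2 v2) (J.rat_field u1 v1) (I.rat_field u2 v2)"
  unfolding is_field_iso_def using rat_field_map_bij rat_field_map_add rat_field_map_mult by blast

end

end

definition quad_ext_map :: "('a::field \<Rightarrow> 'b::field) \<Rightarrow> 'a set \<Rightarrow> 'a \<Rightarrow> 'b \<Rightarrow> 'a \<Rightarrow> 'b" where
  "quad_ext_map \<phi> E t T e =
    (let pq = (SOME pq. fst pq \<in> E \<and> snd pq \<in> E \<and> e = fst pq + t * snd pq)
     in \<phi> (fst pq) + T * \<phi> (snd pq))"

context
  fixes \<phi> :: "'a::field \<Rightarrow> 'b::field" and E0 :: "'a set" and E :: "'b set" and t T
  assumes E0: "is_subfield E0" and E: "is_subfield E" and iso: "is_field_iso \<phi> E0 E"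
    and t: "t \<notin> E0" "t * t \<in> E0" and T: "T \<notin> E" "T * T = \<phi> (t * t)"
begin

lemma quad_ext_map_coords:
  assumes "p \<in> E0" "q \<in> E0"
  shows "quad_ext_map \<phi> E0 t T (p + t * q) = \<phi> p + T * \<phi> q"
proof -
  define pq where "pq = (SOME pq. fst pq \<in> E0 \<and> snd pq \<in> E0 \<and> p + t * q = fst pq + t * snd pq)"
  have "fst pq \<in> E0 \<and> snd pq \<in> E0 \<and> p + t * q = fst pq + t * snd pq"
    unfolding pq_def by (rule someI[of _ "(p, q)"]) (simp add: assms)
  then have "fst pq = p \<and> snd pq = q"
    using quad_ext_coords_unique[OF E0 t(1)] assms by metis
  then show ?thesis
    unfolding quad_ext_map_def pq_def[symmetric] Let_def by simp
qed

lemma quad_ext_map_restrict: "a \<in> E0 \<Longrightarrow> quad_ext_map \<phi> E0 t T a = \<phi> a"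
proof -
  assume "a \<in> E0"
  have "\<phi> 0 = 0"
    using iso subfield_0[OF E0] unfolding is_field_iso_def
    by (metis add_0 add_cancel_right_right)
  then show ?thesis
    using quad_ext_map_coords[OF \<open>a \<in> E0\<close> subfield_0[OF E0]] by simp
qed

lemma quad_ext_map_hom:
  assumes "a \<in> quad_ext E0 t" "b \<in> quad_ext E0 t"
  shows "quad_ext_map \<phi> E0 t T (a + b) = quad_ext_map \<phi> E0 t T a + quad_ext_map \<phi> E0 t T b"
    and "quad_ext_map \<phi> E0 t T (a * b) = quad_ext_map \<phi> E0 t T a * quad_ext_map \<phi> E0 t T b"
proof -
  obtain p q where "p \<in> E0" "q \<in> E0" and a: "a = p + t * q"
    using assms(1) by (rule quad_extE)
  obtain p' q' where "p' \<in> E0" "q' \<in> E0" and b: "b = p' + t * q'"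
    using assms(2) by (rule quad_extE)
  note pq = \<open>p \<in> E0\<close> \<open>q \<in> E0\<close> \<open>p' \<in> E0\<close> \<open>q' \<in> E0\<close> and ab = a b
  have \<phi>_add: "\<phi> (x + y) = \<phi> x + \<phi> y" and \<phi>_mult: "\<phi> (x * y) = \<phi> x * \<phi> y"
    if "x \<in> E0" "y \<in> E0" for x y
    using iso that unfolding is_field_iso_def by blast+
  have "a + b = (p + p') + t * (q + q')"
    unfolding ab by (simp add: algebra_simps)
  then have "quad_ext_map \<phi> E0 t T (a + b) = \<phi> (p + p') + T * \<phi> (q + q')"
    using pq by (simp only: quad_ext_map_coords subfield_add[OF E0])
  also have "\<dots> = (\<phi> p + T * \<phi> q) + (\<phi> p' + T * \<phi> q')"
    using pq by (simp add: \<phi>_add algebra_simps)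
  also have "\<dots> = quad_ext_map \<phi> E0 t T a + quad_ext_map \<phi> E0 t T b"
    unfolding ab using pq by (simp only: quad_ext_map_coords)
  finally show "quad_ext_map \<phi> E0 t T (a + b) = quad_ext_map \<phi> E0 t T a + quad_ext_map \<phi> E0 t T b" .
  have in_E0: "p * p' \<in> E0" "(t * t) * (q * q') \<in> E0" "p * q' \<in> E0" "q * p' \<in> E0" "q * q' \<in> E0"
    using pq t by (auto intro!: subfield_mult[OF E0])
  have "a * b = (p * p' + (t * t) * (q * q')) + t * (p * q' + q * p')"
    unfolding ab by (simp add: algebra_simps)
  then have "quad_ext_map \<phi> E0 t T (a * b) =
      \<phi> (p * p' + (t * t) * (q * q')) + T * \<phi> (p * q' + q * p')"
    using in_E0 by (simp only: quad_ext_map_coords subfield_add[OF E0])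
  also have "\<dots> = (\<phi> p * \<phi> p' + \<phi> (t * t) * (\<phi> q * \<phi> q')) + T * (\<phi> p * \<phi> q' + \<phi> q * \<phi> p')"
    using pq in_E0 t by (simp add: \<phi>_add \<phi>_mult)
  also have "\<dots> = (\<phi> p + T * \<phi> q) * (\<phi> p' + T * \<phi> q')"
    using T by (simp add: algebra_simps)
  finally show "quad_ext_map \<phi> E0 t T (a * b) = quad_ext_map \<phi> E0 t T a * quad_ext_map \<phi> E0 t T b"
    using pq by (simp add: ab quad_ext_map_coords)
qed

lemma quad_ext_map_bij: "bij_betw (quad_ext_map \<phi> E0 t T) (quad_ext E0 t) (quad_ext E T)"
  unfolding bij_betw_def
proof
  have \<phi>_bij: "bij_betw \<phi> E0 E"
    using iso unfolding is_field_iso_def by blast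
  show "inj_on (quad_ext_map \<phi> E0 t T) (quad_ext E0 t)"
  proof (rule inj_onI)
    fix a b assume "a \<in> quad_ext E0 t" "b \<in> quad_ext E0 t"
      and eq: "quad_ext_map \<phi> E0 t T a = quad_ext_map \<phi> E0 t T b"
    obtain p q where "p \<in> E0" "q \<in> E0" and a: "a = p + t * q"
      using \<open>a \<in> quad_ext E0 t\<close> by (rule quad_extE)
    obtain p' q' where "p' \<in> E0" "q' \<in> E0" and b: "b = p' + t * q'"
      using \<open>b \<in> quad_ext E0 t\<close> by (rule quad_extE)
    note pq = \<open>p \<in> E0\<close> \<open>q \<in> E0\<close> \<open>p' \<in> E0\<close> \<open>q' \<in> E0\<close> and ab = a b
    have "\<phi> p + T * \<phi> q = \<phi> p' + T * \<phi> q'"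
      using eq pq by (simp add: ab quad_ext_map_coords)
    then have "\<phi> p = \<phi> p' \<and> \<phi> q = \<phi> q'"
      using quad_ext_coords_unique[OF E T(1)] \<phi>_bij pq by (meson bij_betwE)
    then show "a = b"
      using \<phi>_bij pq unfolding ab bij_betw_def inj_on_def by metis
  qed
  show "quad_ext_map \<phi> E0 t T ` quad_ext E0 t = quad_ext E T"
  proof safe
    fix a assume "a \<in> quad_ext E0 t"
    then obtain p q where "p \<in> E0" "q \<in> E0" "a = p + t * q"
      by (rule quad_extE)
    moreover have "\<phi> p \<in> E" "\<phi> q \<in> E"
      using \<phi>_bij calculation by (auto dest: bij_betwE)
    ultimately show "quad_ext_map \<phi> E0 t T a \<in> quad_ext E T"
      by (simp add: quad_ext_map_coords quad_extI)
  next
    fix e assume "e \<in> quad_ext E T"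
    then obtain P Q where "P \<in> E" "Q \<in> E" "e = P + T * Q"
      by (rule quad_extE)
    moreover obtain p q where "p \<in> E0" "q \<in> E0" "P = \<phi> p" "Q = \<phi> q"
      using \<phi>_bij \<open>P \<in> E\<close> \<open>Q \<in> E\<close> unfolding bij_betw_def by blast
    ultimately show "e \<in> quad_ext_map \<phi> E0 t T ` quad_ext E0 t"
      by (metis image_eqI quad_extI quad_ext_map_coords)
  qed
qed

lemma quad_ext_map_iso: "is_field_iso (quad_ext_map \<phi> E0 t T) (quad_ext E0 t) (quad_ext E T)"
  unfolding is_field_iso_def using quad_ext_map_bij quad_ext_map_hom by blast

end

context two_field_embeddings
begin

lemma k_iso_quad_ext_rat_field:
  assumes nonsquare: "\<forall>b. b * b \<noteq> a"
    and indep1: "J.indep_pair u1 v1" and z1: "j a * z1 ^ 2 = v1 ^ 2 - J.peval f u1"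
    and indep2: "I.indep_pair u2 v2" and z2: "i a * z2 ^ 2 = v2 ^ 2 - I.peval f u2"
  shows "k_iso j (quad_ext (J.rat_field u1 v1) z1) i (quad_ext (I.rat_field u2 v2) z2)"
proof -
  have "a \<noteq> 0"
    using nonsquare by (metis mult_zero_left)
  define \<phi> where "\<phi> = rat_field_map u1 v1 u2 v2"
  have \<phi>_iso: "is_field_iso \<phi> (J.rat_field u1 v1) (I.rat_field u2 v2)"
    unfolding \<phi>_def by (rule rat_field_map_iso[OF indep1 indep2])
  have \<phi>_fraction: "\<phi> (J.peval2 u1 v1 P / J.peval2 u1 v1 Q) = I.peval2 u2 v2 P / I.peval2 u2 v2 Q"
    if "Q \<noteq> 0" for P Q
    unfolding \<phi>_def by (rule rat_field_map_fraction[OF indep1 indep2 that])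
  have "[:[:a:]:] \<noteq> 0"
    using \<open>a \<noteq> 0\<close> by simp
  then have z_squares: "z2 * z2 = \<phi> (z1 * z1)"
    unfolding J.square_eq_fraction[OF \<open>a \<noteq> 0\<close> z1] I.square_eq_fraction[OF \<open>a \<noteq> 0\<close> z2]
    by (rule \<phi>_fraction[symmetric])
  note quad_ext_facts = J.rat_field_subfield I.rat_field_subfield \<phi>_iso
    J.square_root_not_in_rat_field[OF indep1 nonsquare z1] J.square_in_rat_field[OF \<open>a \<noteq> 0\<close> z1]
    I.square_root_not_in_rat_field[OF indep2 nonsquare z2] z_squares
  have iso: "is_field_iso (quad_ext_map \<phi> (J.rat_field u1 v1) z1 z2)
      (quad_ext (J.rat_field u1 v1) z1) (quad_ext (I.rat_field u2 v2) z2)"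
    by (rule quad_ext_map_iso[OF quad_ext_facts])
  have "quad_ext_map \<phi> (J.rat_field u1 v1) z1 z2 (j c) = i c" for c
  proof -
    have jc: "j c = J.peval2 u1 v1 [:[:c:]:] / J.peval2 u1 v1 1"
      by simp
    then have "j c \<in> J.rat_field u1 v1"
      by (metis J.rat_fieldI)
    then have "quad_ext_map \<phi> (J.rat_field u1 v1) z1 z2 (j c) = \<phi> (j c)"
      by (rule quad_ext_map_restrict[OF quad_ext_facts])
    also have "\<dots> = I.peval2 u2 v2 [:[:c:]:] / I.peval2 u2 v2 1"
      unfolding jc by (rule \<phi>_fraction) simp
    also have "\<dots> = i c"
      by simp
    finally show ?thesis .
  qed
  with iso show ?thesis
    unfolding k_iso_iff by blast
qed

end

section \<open>Algebraic dependence from linear growth\<close>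

context field_embedding
begin

sublocale vs: vector_space "\<lambda>c v. j c * v"
  by unfold_locales (simp_all add: j_add j_mult algebra_simps)

lemma span_mult_left:
  assumes "x \<in> vs.span A" and "\<And>s. s \<in> A \<Longrightarrow> c * s \<in> vs.span B"
  shows "c * x \<in> vs.span B"
  using assms(1)
proof (induction rule: vs.span_induct_alt)
  case (step a s y)
  have "c * (j a * s + y) = j a * (c * s) + c * y"
    by (simp add: algebra_simps)
  then show ?case
    using assms(2)[OF step(1)] step(2) by (simp add: vs.span_add vs.span_scale)
qed (simp add: vs.span_zero)

lemma alg_indep_monomials_inj:
  assumes indep: "alg_indep (range j) {b1, b2}" and "b1 \<noteq> b2"
  shows "inj (\<lambda>x. b1 ^ fst x * b2 ^ snd x)"
proof (rule injI)
  fix x y assume same: "b1 ^ fst x * b2 ^ snd x = b1 ^ fst y * b2 ^ snd y"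
  show "x = y"
  proof (rule ccontr)
    assume "x \<noteq> y"
    define c where "c p = (if p = x then 1 else - 1 :: 'l)" for p
    have "(\<Sum>p\<in>{x, y}. c p * (b1 ^ fst p * b2 ^ snd p)) = 0"
      using \<open>x \<noteq> y\<close> same by (simp add: c_def)
    moreover have "c p = j (if p = x then 1 else - 1)" for p
      by (simp add: c_def j_uminus)
    ultimately have "\<forall>p\<in>{x, y}. c p = 0"
      by (intro alg_indep_pairD[OF indep \<open>b1 \<noteq> b2\<close>]) (auto simp del: j_eq_0_iff)
    then show False
      by (simp add: c_def)
  qed
qed

lemma alg_indep_monomials_independent:
  assumes indep: "alg_indep (range j) {b1, b2}" and "b1 \<noteq> b2" and "Q \<noteq> 0"
  defines "e \<equiv> \<lambda>x. Q * (b1 ^ fst x * b2 ^ snd x)"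
  shows "inj e" and "vs.independent (range e)"
proof -
  show inj: "inj e"
    using alg_indep_monomials_inj[OF indep \<open>b1 \<noteq> b2\<close>] \<open>Q \<noteq> 0\<close>
    unfolding e_def inj_def by simp
  show "vs.independent (range e)"
  proof
    assume "vs.dependent (range e)"
    then obtain T c where "finite T" "T \<subseteq> range e" and relation: "(\<Sum>v\<in>T. j (c v) * v) = 0"
      and "\<exists>v\<in>T. c v \<noteq> 0"
      unfolding vs.dependent_explicit by blast
    define I where "I = e -` T"
    have T: "T = e ` I"
      using \<open>T \<subseteq> range e\<close> unfolding I_def by auto
    have "finite I"
      unfolding I_def using \<open>finite T\<close> inj by (rule finite_vimageI)
    have "Q * (\<Sum>x\<in>I. j (c (e x)) * (b1 ^ fst x * b2 ^ snd x)) = (\<Sum>x\<in>I. j (c (e x)) * e x)"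
      by (simp add: e_def sum_distrib_left algebra_simps)
    also have "\<dots> = 0"
      using relation unfolding T by (simp add: sum.reindex inj_on_subset[OF inj])
    finally have "\<forall>x\<in>I. j (c (e x)) = 0"
      using \<open>Q \<noteq> 0\<close> by (intro alg_indep_pairD[OF indep \<open>b1 \<noteq> b2\<close> \<open>finite I\<close>]) auto
    then show False
      using \<open>\<exists>v\<in>T. c v \<noteq> 0\<close> unfolding T by auto
  qed
qed

end

text \<open>Suppose the \<open>k\<close>-subspaces \<open>V D\<close> of \<open>L\<close> have dimension \<open>O(D)\<close> and
  \<open>V D \<cdot> V E \<subseteq> V (D + E + K)\<close>. For \<open>b\<^sub>i = p\<^sub>i / q\<^sub>i\<close> with \<open>p\<^sub>i, q\<^sub>i \<in> V d\<close>,
  the \<open>(N + 1)\<^sup>2\<close> elements \<open>(q\<^sub>1 q\<^sub>2)\<^sup>N b\<^sub>1\<^sup>a b\<^sub>2\<^sup>c\<close>, \<open>a, c \<le> N\<close>, all lie in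
  \<open>V (O(N))\<close>, so for large \<open>N\<close> they are linearly dependent.\<close>

locale linear_growth = field_embedding j for j :: "'k::field \<Rightarrow> 'l::field" +
  fixes V S :: "nat \<Rightarrow> 'l set" and C K :: nat
  assumes V_span: "V D = vs.span (S D)"
    and finite_S: "finite (S D)"
    and card_S: "card (S D) \<le> C * (D + 1)"
    and one_in_V: "1 \<in> V 0"
    and V_mult: "p \<in> V D \<Longrightarrow> q \<in> V E \<Longrightarrow> p * q \<in> V (D + E + K)"
begin

lemma power_in_V: "p \<in> V d \<Longrightarrow> p ^ r \<in> V (r * (d + K))"
proof (induction r)
  case (Suc r)
  then have "p * p ^ r \<in> V (d + r * (d + K) + K)"
    by (intro V_mult)
  moreover have "d + r * (d + K) + K = Suc r * (d + K)"
    by simp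
  ultimately show ?case
    by simp
qed (simp add: one_in_V)

lemma homogeneous_in_V:
  assumes "p \<in> V d" "q \<in> V d" "a \<le> N"
  shows "p ^ a * q ^ (N - a) \<in> V (N * (d + K) + K)"
  using V_mult[OF power_in_V[OF assms(1), of a] power_in_V[OF assms(2), of "N - a"]] assms(3)
  by (simp add: add_mult_distrib[symmetric])

lemma cleared_monomial_in_V:
  assumes "p1 \<in> V d" "q1 \<in> V d" "p2 \<in> V d" "q2 \<in> V d" "q1 \<noteq> 0" "q2 \<noteq> 0"
    and "a \<le> N" "c \<le> N"
  shows "q1 ^ N * q2 ^ N * ((p1 / q1) ^ a * (p2 / q2) ^ c) \<in> V (2 * N * (d + K) + 3 * K)"
proof -
  have "q1 ^ N = q1 ^ a * q1 ^ (N - a)" "q2 ^ N = q2 ^ c * q2 ^ (N - c)"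
    using assms by (simp_all add: power_add[symmetric])
  then have "q1 ^ N * q2 ^ N * ((p1 / q1) ^ a * (p2 / q2) ^ c) =
      (p1 ^ a * q1 ^ (N - a)) * (p2 ^ c * q2 ^ (N - c))"
    using assms by (simp add: power_divide algebra_simps)
  also have "\<dots> \<in> V ((N * (d + K) + K) + (N * (d + K) + K) + K)"
    using assms by (intro V_mult homogeneous_in_V)
  also have "(N * (d + K) + K) + (N * (d + K) + K) + K = 2 * N * (d + K) + 3 * K"
    by simp
  finally show ?thesis .
qed

lemma fractions_not_alg_indep:
  assumes in_V: "p1 \<in> V d" "q1 \<in> V d" "p2 \<in> V d" "q2 \<in> V d" and "q1 \<noteq> 0" "q2 \<noteq> 0"
    and "b1 \<noteq> b2" "b1 = p1 / q1" "b2 = p2 / q2"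
  shows "\<not> alg_indep (range j) {b1, b2}"
proof
  assume indep: "alg_indep (range j) {b1, b2}"
  define \<alpha> where "\<alpha> = 2 * C * (d + K)"
  define \<beta> where "\<beta> = 3 * C * K + C"
  define N where "N = \<alpha> + \<beta> + 1"
  define D where "D = 2 * N * (d + K) + 3 * K"
  define I where "I = {..N} \<times> {..N}"
  define Q where "Q = q1 ^ N * q2 ^ N"
  define e where "e x = Q * (b1 ^ fst x * b2 ^ snd x)" for x
  have "Q \<noteq> 0"
    using \<open>q1 \<noteq> 0\<close> \<open>q2 \<noteq> 0\<close> by (simp add: Q_def)
  have e_in_V: "e ` I \<subseteq> V D"
    using cleared_monomial_in_V[OF in_V \<open>q1 \<noteq> 0\<close> \<open>q2 \<noteq> 0\<close>] \<open>b1 = p1 / q1\<close> \<open>b2 = p2 / q2\<close>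
    by (auto simp: I_def e_def Q_def D_def)
  have "card (S D) \<le> \<alpha> * N + \<beta>"
    using card_S[of D] unfolding D_def \<alpha>_def \<beta>_def by (simp add: algebra_simps)
  also have "\<dots> \<le> \<alpha> * N + \<beta> * N"
    unfolding N_def by simp
  also have "\<dots> < (N + 1) * (N + 1)"
    unfolding N_def by (simp add: algebra_simps)
  also have "\<dots> = card I"
    by (simp add: I_def)
  also have "card I = card (e ` I)"
    using alg_indep_monomials_independent(1)[OF indep \<open>b1 \<noteq> b2\<close> \<open>Q \<noteq> 0\<close>]
    by (simp add: card_image inj_on_subset e_def[abs_def])
  also have "\<dots> \<le> card (S D)"
  proof -
    have "vs.independent (e ` I)"
      using alg_indep_monomials_independent(2)[OF indep \<open>b1 \<noteq> b2\<close> \<open>Q \<noteq> 0\<close>]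
      by (rule vs.independent_mono) (auto simp: e_def)
    then show ?thesis
      using vs.independent_span_bound[OF finite_S] e_in_V V_span by metis
  qed
  finally show False
    by simp
qed

end

text \<open>The linear growth hypothesis holds for \<open>k[z, u, w]\<close> when \<open>u\<close> is integral over
  \<open>k[z]\<close> of degree \<open>m\<close> and \<open>w\<^sup>2 \<in> k[z, u]\<close>: filter by the \<open>z\<close>-degree of the
  coordinates in the basis \<open>u\<^sup>b w\<^sup>c\<close>, \<open>b < m\<close>, \<open>c < 2\<close>.\<close>

locale integral_tower = field_embedding j for j :: "'k::field \<Rightarrow> 'l::field" +
  fixes z u w :: 'l and m n :: nat and g h :: "nat \<Rightarrow> 'k poly"
  assumes m_pos: "0 < m"
    and u_integral: "u ^ m = (\<Sum>i<m. peval (g i) z * u ^ i)"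
    and w_square: "w ^ 2 = (\<Sum>i<n. peval (h i) z * u ^ i)"
begin

definition monomials :: "nat \<Rightarrow> 'l set" where
  "monomials D = (\<lambda>(a, b, c). z ^ a * u ^ b * w ^ c) ` ({..D} \<times> {..<m} \<times> {..<2})"

definition level :: "nat \<Rightarrow> 'l set" where
  "level D = vs.span (monomials D)"

definition deg_u :: nat where
  "deg_u = (\<Sum>i<m. degree (g i))"

definition deg_w :: nat where
  "deg_w = n * deg_u + (\<Sum>i<n. degree (h i))"

definition deg_mult :: nat where
  "deg_mult = m * deg_u + deg_w"

lemma finite_monomials: "finite (monomials D)"
  by (simp add: monomials_def)

lemma card_monomials: "card (monomials D) \<le> (2 * m) * (D + 1)"
  unfolding monomials_def
  by (rule card_image_le[THEN order.trans]) (simp_all add: card_cartesian_product)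

lemma level_mono: "x \<in> level D \<Longrightarrow> D \<le> D' \<Longrightarrow> x \<in> level D'"
proof -
  assume "x \<in> level D" "D \<le> D'"
  moreover have "monomials D \<subseteq> monomials D'"
    unfolding monomials_def using \<open>D \<le> D'\<close> by (intro image_mono) auto
  ultimately show ?thesis
    unfolding level_def using vs.span_mono by blast
qed

lemma monomial_in_level: "a \<le> D \<Longrightarrow> b < m \<Longrightarrow> c < 2 \<Longrightarrow> z ^ a * u ^ b * w ^ c \<in> level D"
  unfolding level_def monomials_def by (rule vs.span_base) force

lemma level_sum: "(\<And>i. i \<in> A \<Longrightarrow> f i \<in> level D) \<Longrightarrow> sum f A \<in> level D"
  unfolding level_def by (rule vs.span_sum)

lemma level_scale: "x \<in> level D \<Longrightarrow> j c * x \<in> level D"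
  unfolding level_def by (rule vs.span_scale)

lemma one_in_level: "1 \<in> level 0"
  using monomial_in_level[of 0 0 0 0] m_pos by simp

lemma level_mult_left:
  assumes "x \<in> level D"
    and "\<And>a b c. a \<le> D \<Longrightarrow> b < m \<Longrightarrow> c < 2 \<Longrightarrow> y * (z ^ a * u ^ b * w ^ c) \<in> level E"
  shows "y * x \<in> level E"
  using assms(1) unfolding level_def
  by (rule span_mult_left) (use assms(2) in \<open>auto simp: monomials_def level_def\<close>)

lemma z_power_mult_level: "x \<in> level D \<Longrightarrow> z ^ r * x \<in> level (D + r)"
proof (induction r)
  case (Suc r)
  have "z * (z ^ r * x) \<in> level (D + r + 1)"
  proof (rule level_mult_left[OF Suc.IH[OF Suc.prems]])
    fix a b c assume "a \<le> D + r" "b < m" "c < (2::nat)"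
    then have "z ^ Suc a * u ^ b * w ^ c \<in> level (D + r + 1)"
      by (intro monomial_in_level) auto
    then show "z * (z ^ a * u ^ b * w ^ c) \<in> level (D + r + 1)"
      by (simp add: mult.assoc)
  qed
  then show ?case
    by (simp add: mult.assoc)
qed simp

lemma peval_mult_level: "x \<in> level D \<Longrightarrow> peval p z * x \<in> level (D + degree p)"
proof -
  assume "x \<in> level D"
  have "peval p z * x = (\<Sum>i\<le>degree p. j (coeff p i) * (z ^ i * x))"
    by (simp add: peval_sum_upto[of p "degree p"] sum_distrib_right mult.assoc)
  also have "\<dots> \<in> level (D + degree p)"
    using \<open>x \<in> level D\<close> by (intro level_sum level_scale level_mono[OF z_power_mult_level]) auto
  finally show ?thesis .
qed

lemma u_mult_level: "x \<in> level D \<Longrightarrow> u * x \<in> level (D + deg_u)"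
proof (erule level_mult_left)
  fix a b c assume abc: "a \<le> D" "b < m" "c < (2::nat)"
  show "u * (z ^ a * u ^ b * w ^ c) \<in> level (D + deg_u)"
  proof (cases "Suc b < m")
    case True
    then have "z ^ a * u ^ Suc b * w ^ c \<in> level (D + deg_u)"
      using abc by (intro monomial_in_level) auto
    then show ?thesis
      by (simp add: ac_simps)
  next
    case False
    then have "Suc b = m"
      using abc by simp
    then have "u * (z ^ a * u ^ b * w ^ c) = u ^ m * (z ^ a * w ^ c)"
      by (auto simp: ac_simps)
    also have "\<dots> = (\<Sum>i<m. peval (g i) z * u ^ i * (z ^ a * w ^ c))"
      by (simp only: u_integral sum_distrib_right)
    also have "\<dots> = (\<Sum>i<m. peval (g i) z * (z ^ a * u ^ i * w ^ c))"
      by (intro sum.cong refl) (simp add: ac_simps)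
    also have "\<dots> \<in> level (D + deg_u)"
    proof (intro level_sum)
      fix i assume "i \<in> {..<m}"
      have "degree (g i) \<le> deg_u"
        unfolding deg_u_def using \<open>i \<in> {..<m}\<close> by (intro member_le_sum) auto
      have "peval (g i) z * (z ^ a * u ^ i * w ^ c) \<in> level (D + degree (g i))"
        using abc \<open>i \<in> {..<m}\<close> by (intro peval_mult_level monomial_in_level) auto
      then show "peval (g i) z * (z ^ a * u ^ i * w ^ c) \<in> level (D + deg_u)"
        by (rule level_mono) (simp add: \<open>degree (g i) \<le> deg_u\<close>)
    qed
    finally show ?thesis .
  qed
qed

lemma u_power_mult_level: "x \<in> level D \<Longrightarrow> u ^ r * x \<in> level (D + r * deg_u)"
proof (induction r)
  case (Suc r)
  have "u * (u ^ r * x) \<in> level (D + r * deg_u + deg_u)"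
    by (rule u_mult_level[OF Suc.IH[OF Suc.prems]])
  then show ?case
    by (simp add: mult.assoc algebra_simps)
qed simp

lemma w_mult_level: "x \<in> level D \<Longrightarrow> w * x \<in> level (D + deg_w)"
proof (erule level_mult_left)
  fix a b c assume abc: "a \<le> D" "b < m" "c < (2::nat)"
  show "w * (z ^ a * u ^ b * w ^ c) \<in> level (D + deg_w)"
  proof (cases "c = 0")
    case True
    then have "z ^ a * u ^ b * w ^ 1 \<in> level (D + deg_w)"
      using abc by (intro monomial_in_level) auto
    then show ?thesis
      using True by (simp add: ac_simps)
  next
    case False
    then have "c = 1"
      using abc by simp
    have "w * (z ^ a * u ^ b * w ^ c) = w ^ 2 * (z ^ a * u ^ b * w ^ 0)"
      by (simp add: \<open>c = 1\<close> power2_eq_square ac_simps)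
    also have "\<dots> = (\<Sum>i<n. peval (h i) z * (u ^ i * (z ^ a * u ^ b * w ^ 0)))"
      by (simp add: w_square sum_distrib_right mult.assoc)
    also have "\<dots> \<in> level (D + deg_w)"
    proof (intro level_sum)
      fix i assume "i \<in> {..<n}"
      have "u ^ i * (z ^ a * u ^ b * w ^ 0) \<in> level (D + i * deg_u)"
        using abc by (intro u_power_mult_level monomial_in_level) auto
      then have "u ^ i * (z ^ a * u ^ b * w ^ 0) \<in> level (D + n * deg_u)"
        by (rule level_mono) (use \<open>i \<in> {..<n}\<close> in auto)
      then have "peval (h i) z * (u ^ i * (z ^ a * u ^ b * w ^ 0)) \<in> level (D + n * deg_u + degree (h i))"
        by (rule peval_mult_level)
      moreover have "degree (h i) \<le> (\<Sum>i<n. degree (h i))"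
        using \<open>i \<in> {..<n}\<close> by (intro member_le_sum) auto
      ultimately show "peval (h i) z * (u ^ i * (z ^ a * u ^ b * w ^ 0)) \<in> level (D + deg_w)"
        unfolding deg_w_def by (metis level_mono add.assoc add_le_mono order_refl)
    qed
    finally show ?thesis .
  qed
qed

lemma level_mult:
  assumes x: "x \<in> level D" and y: "y \<in> level E"
  shows "x * y \<in> level (D + E + deg_mult)"
proof (rule level_mult_left[OF y])
  fix a b c assume abc: "a \<le> E" "b < m" "c < (2::nat)"
  have "u ^ b * (z ^ a * x) \<in> level (D + a + b * deg_u)"
    using x by (intro u_power_mult_level z_power_mult_level)
  then have "w ^ c * (u ^ b * (z ^ a * x)) \<in> level (D + a + b * deg_u + c * deg_w)"
    using abc w_mult_level by (cases c) auto
  moreover have "D + a + b * deg_u + c * deg_w \<le> D + E + deg_mult"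
  proof -
    have "b * deg_u \<le> m * deg_u" "c * deg_w \<le> deg_w"
      using abc by (auto simp: less_2_cases_iff)
    then show ?thesis
      using abc unfolding deg_mult_def by linarith
  qed
  ultimately have "w ^ c * (u ^ b * (z ^ a * x)) \<in> level (D + E + deg_mult)"
    by (rule level_mono)
  then show "x * (z ^ a * u ^ b * w ^ c) \<in> level (D + E + deg_mult)"
    by (simp add: ac_simps)
qed

sublocale linear_growth j level monomials "2 * m" deg_mult
  using level_def finite_monomials card_monomials one_in_level level_mult by unfold_locales auto

definition ring :: "'l set" where
  "ring = (\<Union>D. level D)"

lemma zero_in_ring: "0 \<in> ring"
  unfolding ring_def level_def using vs.span_zero by blast

lemma one_in_ring: "1 \<in> ring"
  unfolding ring_def using one_in_level by blast

lemma ring_subfield: "is_subfield {p / q | p q. p \<in> ring \<and> q \<in> ring}"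
proof (rule subfield_of_fractions[OF zero_in_ring one_in_ring])
  show "x + y \<in> ring" if xy: "x \<in> ring" "y \<in> ring" for x y
  proof -
    obtain D E where "x \<in> level D" "y \<in> level E"
      using xy unfolding ring_def by blast
    then have "x \<in> level (D + E)" "y \<in> level (D + E)"
      by (auto elim: level_mono)
    then show ?thesis
      unfolding ring_def level_def using vs.span_add by blast
  qed
  show "x * y \<in> ring" if "x \<in> ring" "y \<in> ring" for x y
    using that level_mult unfolding ring_def by blast
  show "- x \<in> ring" if "x \<in> ring" for x
    using that vs.span_neg unfolding ring_def level_def by blast
qed

lemma ring_fractions_not_alg_indep:
  assumes "b1 \<in> {p / q | p q. p \<in> ring \<and> q \<in> ring}" "b2 \<in> {p / q | p q. p \<in> ring \<and> q \<in> ring}"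
    and "b1 \<noteq> b2"
  shows "\<not> alg_indep (range j) {b1, b2}"
proof -
  have fraction: "\<exists>p q. p \<in> ring \<and> q \<in> ring \<and> q \<noteq> 0 \<and> b = p / q"
    if b_in: "b \<in> {p / q | p q. p \<in> ring \<and> q \<in> ring}" for b
  proof -
    obtain p q where "p \<in> ring" "q \<in> ring" "b = p / q"
      using b_in by blast
    then show ?thesis
    proof (cases "q = 0")
      case True
      then show ?thesis
        using \<open>b = p / q\<close> zero_in_ring one_in_ring by (intro exI[of _ 0] exI[of _ 1]) simp
    qed auto
  qed
  obtain p1 q1 p2 q2 where in_ring: "p1 \<in> ring" "q1 \<in> ring" "p2 \<in> ring" "q2 \<in> ring"
    and "q1 \<noteq> 0" "q2 \<noteq> 0" "b1 = p1 / q1" "b2 = p2 / q2"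
    using fraction[OF assms(1)] fraction[OF assms(2)] by blast
  then obtain d1 d2 d3 d4 where "p1 \<in> level d1" "q1 \<in> level d2" "p2 \<in> level d3" "q2 \<in> level d4"
    unfolding ring_def by blast
  then have "p1 \<in> level (d1 + d2 + d3 + d4)" "q1 \<in> level (d1 + d2 + d3 + d4)"
    "p2 \<in> level (d1 + d2 + d3 + d4)" "q2 \<in> level (d1 + d2 + d3 + d4)"
    by (auto elim!: level_mono)
  from fractions_not_alg_indep[OF this \<open>q1 \<noteq> 0\<close> \<open>q2 \<noteq> 0\<close> assms(3) \<open>b1 = p1 / q1\<close> \<open>b2 = p2 / q2\<close>]
  show ?thesis .
qed

lemma generators_in_fractions:
  "range j \<union> {z, u, w} \<subseteq> {p / q | p q. p \<in> ring \<and> q \<in> ring}"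
proof -
  have "x \<in> {p / q | p q. p \<in> ring \<and> q \<in> ring}" if "x \<in> level D" for x D
    using that one_in_level unfolding ring_def by (intro CollectI exI[of _ x] exI[of _ 1]) auto
  moreover have "j c \<in> level 0" for c
    by (rule level_scale[OF one_in_level, simplified])
  moreover have "z \<in> level 1" "u \<in> level deg_u" "w \<in> level deg_w"
    using z_power_mult_level[OF one_in_level, of 1] u_mult_level[OF one_in_level]
      w_mult_level[OF one_in_level] by simp_all
  ultimately show ?thesis
    by blast
qed

end

context field_embedding
begin

definition pairwise_dependent :: "'l set \<Rightarrow> bool" where
  "pairwise_dependent R \<longleftrightarrow> (\<forall>b1\<in>R. \<forall>b2\<in>R. b1 \<noteq> b2 \<longrightarrow> \<not> alg_indep (range j) {b1, b2})"

lemma integral_tower_pairwise_dependent: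
  assumes "0 < m" "u ^ m = (\<Sum>i<m. peval (g i) z * u ^ i)" "w ^ 2 = (\<Sum>i<n. peval (h i) z * u ^ i)"
  shows "\<exists>R. is_subfield R \<and> range j \<union> {z, u, w} \<subseteq> R \<and> pairwise_dependent R"
proof -
  interpret integral_tower j z u w m n g h
    using assms by unfold_locales
  show ?thesis
    using ring_subfield generators_in_fractions ring_fractions_not_alg_indep
    unfolding pairwise_dependent_def by blast
qed

lemma pairwise_dependent_if_algebraic:
  assumes "p \<noteq> 0" "peval p x0 = 0" and rel: "t1 ^ 2 - j a * t2 ^ 2 = peval f x0"
  shows "\<exists>R. is_subfield R \<and> range j \<union> {x0, t1, t2} \<subseteq> R \<and> pairwise_dependent R"
proof -
  define m where "m = degree p"
  define c where "c = lead_coeff p"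
  have "c \<noteq> 0"
    using \<open>p \<noteq> 0\<close> by (simp add: c_def)
  have "0 < m"
  proof (rule ccontr)
    assume "\<not> 0 < m"
    then have "p = [:c:]"
      unfolding c_def m_def by (metis degree_0_id neq0_conv)
    with \<open>peval p x0 = 0\<close> \<open>c \<noteq> 0\<close> show False
      by simp
  qed
  have "0 = (\<Sum>i\<le>m. j (coeff p i) * x0 ^ i)"
    using \<open>peval p x0 = 0\<close> peval_sum_upto[of p m x0] by (simp add: m_def)
  also have "\<dots> = (\<Sum>i<m. j (coeff p i) * x0 ^ i) + j c * x0 ^ m"
    by (simp add: lessThan_Suc_atMost[symmetric] c_def m_def)
  finally have top: "j c * x0 ^ m = - (\<Sum>i<m. j (coeff p i) * x0 ^ i)"
    by (simp add: eq_neg_iff_add_eq_0 add.commute)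
  define g where "g i = [:- (coeff p i / c):]" for i
  have "x0 ^ m = inverse (j c) * (j c * x0 ^ m)"
    using \<open>c \<noteq> 0\<close> by simp
  also have "\<dots> = (\<Sum>i<m. peval (g i) t2 * x0 ^ i)"
    unfolding top by (simp add: g_def sum_distrib_left j_simps field_simps sum_negf)
  finally have x0_integral: "x0 ^ m = (\<Sum>i<m. peval (g i) t2 * x0 ^ i)" .
  define h where "h i = [:coeff f i:] + (if i = 0 then [:0, 0, a:] else 0)" for i
  have "(\<Sum>i<Suc (degree f). peval (h i) t2 * x0 ^ i) =
      (\<Sum>i<Suc (degree f). j (coeff f i) * x0 ^ i) + (\<Sum>i<Suc (degree f). (if i = 0 then j a * t2 ^ 2 else 0) * x0 ^ i)"
    unfolding sum.distrib[symmetric] by (intro sum.cong refl) (simp add: h_def algebra_simps power2_eq_square)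
  also have "\<dots> = peval f x0 + j a * t2 ^ 2"
    by (simp add: peval_sum_upto[of f "degree f"] lessThan_Suc_atMost if_distrib[of "\<lambda>v. v * _"] cong: if_cong)
  finally have t1_square: "t1 ^ 2 = (\<Sum>i<Suc (degree f). peval (h i) t2 * x0 ^ i)"
    using rel by (simp add: algebra_simps)
  from integral_tower_pairwise_dependent[OF \<open>0 < m\<close> x0_integral t1_square] show ?thesis
    by auto
qed

lemma lead_coeff_scaled_root_integral:
  assumes root: "peval2 u t R = 0" and "0 < degree R"
  defines "\<gamma> \<equiv> peval (lead_coeff R) u" and "m \<equiv> degree R"
  shows "(\<gamma> * t) ^ m =
    (\<Sum>i<m. peval (- (coeff R i * lead_coeff R ^ (m - 1 - i))) u * (\<gamma> * t) ^ i)"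
proof -
  define r where "r i = peval (coeff R i) u" for i
  have "0 = (\<Sum>i\<le>m. r i * t ^ i)"
    using root by (simp add: peval2_sum_upto[of R m] m_def r_def)
  also have "\<dots> = (\<Sum>i<m. r i * t ^ i) + \<gamma> * t ^ m"
    by (simp add: lessThan_Suc_atMost[symmetric] r_def \<gamma>_def m_def)
  finally have top: "\<gamma> * t ^ m = - (\<Sum>i<m. r i * t ^ i)"
    by (simp add: eq_neg_iff_add_eq_0 add.commute)
  have "\<gamma> ^ m = \<gamma> ^ (m - 1) * \<gamma>"
    using \<open>0 < degree R\<close> unfolding m_def by (metis Suc_diff_1 power_Suc2)
  then have "(\<gamma> * t) ^ m = \<gamma> ^ (m - 1) * (\<gamma> * t ^ m)"
    by (simp add: power_mult_distrib mult.assoc)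
  also have "\<dots> = (\<Sum>i<m. - (r i * \<gamma> ^ (m - 1)) * t ^ i)"
    unfolding top by (simp add: sum_distrib_left sum_negf algebra_simps)
  also have "\<dots> = (\<Sum>i<m. peval (- (coeff R i * lead_coeff R ^ (m - 1 - i))) u * (\<gamma> * t) ^ i)"
  proof (intro sum.cong refl)
    fix i assume "i \<in> {..<m}"
    then have "\<gamma> ^ (m - 1) = \<gamma> ^ (m - 1 - i) * \<gamma> ^ i"
      by (simp add: power_add[symmetric])
    then show "- (r i * \<gamma> ^ (m - 1)) * t ^ i =
        peval (- (coeff R i * lead_coeff R ^ (m - 1 - i))) u * (\<gamma> * t) ^ i"
      by (simp add: r_def \<gamma>_def power_mult_distrib algebra_simps)
  qed
  finally show ?thesis .
qed

text \<open>With \<open>\<gamma> \<noteq> 0\<close> the leading coefficient of the relation \<open>R\<close> evaluated at \<open>x\<^sub>0\<close>,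
  \<open>u = \<gamma> t\<^sub>1\<close> is integral over \<open>k[x\<^sub>0]\<close> and \<open>w = \<gamma> t\<^sub>2\<close> satisfies
  \<open>w\<^sup>2 = (u\<^sup>2 - \<gamma>\<^sup>2 f(x\<^sub>0)) / a\<close>.\<close>

lemma pairwise_dependent_if_not_indep_pair:
  assumes transc: "\<forall>p. p \<noteq> 0 \<longrightarrow> peval p x0 \<noteq> 0" and "\<not> indep_pair x0 t1"
    and "a \<noteq> 0" and rel: "t1 ^ 2 - j a * t2 ^ 2 = peval f x0"
  shows "\<exists>R. is_subfield R \<and> range j \<union> {x0, t1, t2} \<subseteq> R \<and> pairwise_dependent R"
proof -
  obtain R0 where "R0 \<noteq> 0" and root: "peval2 x0 t1 R0 = 0"
    using \<open>\<not> indep_pair x0 t1\<close> unfolding indep_pair_def by blast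
  define c where "c = lead_coeff R0"
  define \<gamma> where "\<gamma> = peval c x0"
  have "\<gamma> \<noteq> 0"
    using transc \<open>R0 \<noteq> 0\<close> by (simp add: \<gamma>_def c_def)
  have "0 < degree R0"
  proof (rule ccontr)
    assume "\<not> 0 < degree R0"
    then have "R0 = [:c:]"
      unfolding c_def by (metis degree_0_id neq0_conv)
    with root \<open>\<gamma> \<noteq> 0\<close> show False
      by (simp add: \<gamma>_def)
  qed
  define u where "u = \<gamma> * t1"
  define w where "w = \<gamma> * t2"
  have u_integral: "u ^ degree R0 = (\<Sum>i<degree R0. peval (- (coeff R0 i * c ^ (degree R0 - 1 - i))) x0 * u ^ i)"
    unfolding u_def \<gamma>_def c_def by (rule lead_coeff_scaled_root_integral[OF root \<open>0 < degree R0\<close>])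
  define h where "h i = (if i = 0 then smult (- inverse a) (c ^ 2 * f)
    else if i = 2 then [:inverse a:] else 0)" for i :: nat
  have "(\<Sum>i<3. peval (h i) x0 * u ^ i) = peval (h 0) x0 + peval (h 2) x0 * u ^ 2"
    by (simp add: numeral_3_eq_3 lessThan_Suc h_def power2_eq_square)
  also have "\<dots> = (\<gamma> ^ 2 * t1 ^ 2 - \<gamma> ^ 2 * peval f x0) / j a"
    using \<open>a \<noteq> 0\<close> by (simp add: h_def u_def \<gamma>_def j_simps power_mult_distrib field_simps)
  also have "\<dots> = w ^ 2"
    using rel \<open>a \<noteq> 0\<close> by (simp add: w_def power_mult_distrib field_simps)
  finally have w_square: "w ^ 2 = (\<Sum>i<3. peval (h i) x0 * u ^ i)" ..
  obtain R where R: "is_subfield R" "range j \<union> {x0, u, w} \<subseteq> R" "pairwise_dependent R"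
    using integral_tower_pairwise_dependent[OF \<open>0 < degree R0\<close> u_integral w_square] by blast
  have "\<gamma> \<in> R"
    unfolding \<gamma>_def using R by (intro peval_in_subfield) auto
  then have "u / \<gamma> \<in> R" "w / \<gamma> \<in> R"
    using R by (auto intro: subfield_divide)
  moreover have "u / \<gamma> = t1" "w / \<gamma> = t2"
    using \<open>\<gamma> \<noteq> 0\<close> by (simp_all add: u_def w_def)
  ultimately show ?thesis
    using R by auto
qed

lemma indep_pair_if_trdeg_two:
  assumes trdeg: "trdeg_eq (range j) (gen_field (range j \<union> {x0, t1, t2})) 2"
    and "a \<noteq> 0" and rel: "t1 ^ 2 - j a * t2 ^ 2 = peval f x0"
  shows "indep_pair x0 t1"
proof (rule ccontr)
  assume "\<not> indep_pair x0 t1"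
  then obtain R where R: "is_subfield R" "range j \<union> {x0, t1, t2} \<subseteq> R" "pairwise_dependent R"
    using pairwise_dependent_if_algebraic[OF _ _ rel] pairwise_dependent_if_not_indep_pair[OF _ _ \<open>a \<noteq> 0\<close> rel]
    by blast
  obtain B where "B \<subseteq> gen_field (range j \<union> {x0, t1, t2})" "card B = 2" "alg_indep (range j) B"
    using trdeg unfolding trdeg_eq_def by blast
  moreover obtain b1 b2 where "B = {b1, b2}" "b1 \<noteq> b2"
    using \<open>card B = 2\<close> by (meson card_2_iff)
  moreover have "gen_field (range j \<union> {x0, t1, t2}) \<subseteq> R"
    using R by (intro gen_field_min) auto
  ultimately show False
    using R(3) unfolding pairwise_dependent_def by blast
qed

end

section \<open>The fixed field of \<open>\<sigma>\<close>\<close>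

locale twisted_function_field = I: field_embedding \<iota>
  for \<iota> :: "'k::field \<Rightarrow> 'o::field" +
  fixes a :: 'k and f :: "'k poly" and s x y :: 'o and \<sigma> :: "'o \<Rightarrow> 'o" and K L :: "'o set"
  assumes char: "(2::'k) \<noteq> 0"
    and nonsquare: "\<forall>b. b * b \<noteq> a"
    and f_nonzero: "f \<noteq> 0"
    and sqrt_a: "s * s = \<iota> a"
    and K_eq: "K = gen_field (range \<iota> \<union> {s})"
    and x_ne_y: "x \<noteq> y" and xy_indep: "alg_indep K {x, y}"
    and L_eq: "L = gen_field (K \<union> {x, y})"
    and \<sigma>_hom: "\<forall>u\<in>L. \<forall>v\<in>L. \<sigma> (u + v) = \<sigma> u + \<sigma> v \<and> \<sigma> (u * v) = \<sigma> u * \<sigma> v"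
    and \<sigma>_\<iota>: "\<forall>c. \<sigma> (\<iota> c) = \<iota> c"
    and \<sigma>_s: "\<sigma> s = - s"
    and \<sigma>_x: "\<sigma> x = x"
    and \<sigma>_y: "\<sigma> y = I.peval f x / y"
begin

definition t1 :: 'o where
  "t1 = (y + I.peval f x / y) / 2"

definition t2 :: 'o where
  "t2 = (y - I.peval f x / y) / (2 * s)"

abbreviation fixed_field :: "'o set" where
  "fixed_field \<equiv> {u \<in> L. \<sigma> u = u}"

lemma a_nonzero: "a \<noteq> 0"
  using nonsquare by (metis mult_zero_left)

lemma two_nonzero: "(2::'o) \<noteq> 0"
  using char I.j_numeral[of "num.Bit0 num.One"] by (metis I.j_eq_0_iff)

lemma four_nonzero: "(4::'o) \<noteq> 0"
  using two_nonzero mult_eq_0_iff[of "2::'o" 2] by simp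

lemma s_nonzero: "s \<noteq> 0"
  using sqrt_a a_nonzero by auto

lemma indep_x_y: "I.indep_pair x y"
proof (rule I.indep_pair_if_alg_indep[OF xy_indep x_ne_y])
  show "range \<iota> \<subseteq> K"
    using gen_field_incl[of "range \<iota> \<union> {s}"] unfolding K_eq by blast
qed

lemma y_nonzero: "y \<noteq> 0"
  using I.indep_pair_peval2_nonzero[OF indep_x_y, of "[:0, 1:]"] by simp

lemma peval_f_nonzero: "I.peval f x \<noteq> 0"
  using I.indep_pair_peval2_nonzero[OF indep_x_y, of "[:f:]"] f_nonzero by simp

lemma y_eq: "y = t1 + s * t2"
  using two_nonzero four_nonzero s_nonzero unfolding t1_def t2_def by (simp add: field_simps)

lemma norm_t1_t2: "t1 ^ 2 - \<iota> a * t2 ^ 2 = I.peval f x"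
proof -
  have "\<iota> a * t2 ^ 2 = (y - I.peval f x / y) ^ 2 / 4"
    unfolding t2_def sqrt_a[symmetric] using s_nonzero four_nonzero
    by (simp add: power2_eq_square field_simps)
  then show ?thesis
    unfolding t1_def using y_nonzero four_nonzero by (simp add: power2_eq_square field_simps)
qed

lemma t2_relation: "\<iota> a * t2 ^ 2 = t1 ^ 2 - I.peval f x"
  using norm_t1_t2 by (simp add: algebra_simps)

lemma indep_x_t1: "I.indep_pair x t1"
  using I.indep_pair_trace[OF indep_x_y] y_nonzero two_nonzero
  unfolding t1_def by (simp add: field_simps power2_eq_square)

lemma x_ne_t1: "x \<noteq> t1"
proof
  assume "x = t1"
  then have "I.peval2 x t1 ([:[:0, 1:]:] - [:0, 1:]) = 0"
    by simp
  then have "([:[:0, 1:]:] - [:0, 1:] :: 'k poly poly) = 0"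
    using indep_x_t1 unfolding I.indep_pair_def by blast
  then show False
    by (metis coeff_diff coeff_pCons_0 coeff_pCons_Suc diff_zero pCons_eq_0_iff zero_neq_one)
qed

lemma t2_square_in: "t2 * t2 \<in> I.rat_field x t1"
  by (rule I.square_in_rat_field[OF a_nonzero t2_relation])

lemma quad_ext_eq_gen_field: "quad_ext (I.rat_field x t1) t2 = gen_field (range \<iota> \<union> {x, t1, t2})"
  by (rule I.quad_ext_rat_field[OF t2_square_in])

lemma L_subfield: "is_subfield L"
  unfolding L_eq by (rule gen_field_is_subfield)

lemma generators_in_L: "range \<iota> \<subseteq> L" "s \<in> L" "x \<in> L" "y \<in> L"
  using gen_field_incl[of "range \<iota> \<union> {s}"] gen_field_incl[of "K \<union> {x, y}"]
  unfolding L_eq K_eq by blast+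

sublocale subfield_endo L \<sigma>
  using L_subfield \<sigma>_hom \<sigma>_\<iota>[rule_format, of 1] by unfold_locales auto

lemma peval_f_fixed: "I.peval f x \<in> fixed_field"
proof -
  have "range \<iota> \<subseteq> fixed_field"
    using generators_in_L(1) \<sigma>_\<iota> by blast
  moreover have "x \<in> fixed_field"
    using generators_in_L(3) \<sigma>_x by blast
  ultimately show ?thesis
    by (rule I.peval_in_subfield[OF fixed_points_subfield])
qed

lemma two_fixed: "(2::'o) \<in> fixed_field"
  using generators_in_L(1) \<sigma>_\<iota> I.j_numeral[of "num.Bit0 num.One"] by (metis (mono_tags) mem_Collect_eq rangeI subsetD)

lemma peval_f_div_y_in_L: "I.peval f x / y \<in> L"
  using generators_in_L by (intro subfield_divide[OF L_subfield] I.peval_in_subfield[OF L_subfield])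

lemma t1_t2_in_L: "t1 \<in> L" "t2 \<in> L"
proof -
  have "2 \<in> L"
    using two_fixed by simp
  show "t1 \<in> L"
    unfolding t1_def
    by (rule subfield_divide[OF L_subfield
          subfield_add[OF L_subfield generators_in_L(4) peval_f_div_y_in_L] \<open>2 \<in> L\<close>])
  show "t2 \<in> L"
    unfolding t2_def
    by (rule subfield_divide[OF L_subfield subfield_diff[OF L_subfield generators_in_L(4) peval_f_div_y_in_L]
          subfield_mult[OF L_subfield \<open>2 \<in> L\<close> generators_in_L(2)]])
qed

lemma t1_t2_fixed: "t1 \<in> fixed_field" "t2 \<in> fixed_field"
proof -
  define F where "F = I.peval f x"
  have "F \<in> L" "\<sigma> F = F" "2 \<in> L" "\<sigma> 2 = 2"
    using peval_f_fixed two_fixed unfolding F_def by auto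
  have "y \<in> L" "s \<in> L"
    using generators_in_L by auto
  have \<sigma>_y': "\<sigma> y = F / y"
    unfolding F_def by (rule \<sigma>_y)
  have "F / y \<in> L"
    using \<open>F \<in> L\<close> \<open>y \<in> L\<close> by (rule subfield_divide[OF L_subfield])
  have "F \<noteq> 0"
    unfolding F_def by (rule peval_f_nonzero)
  have \<sigma>_Fy: "\<sigma> (F / y) = y"
    using hom_divide[OF \<open>F \<in> L\<close> \<open>y \<in> L\<close>] \<open>\<sigma> F = F\<close> \<sigma>_y' y_nonzero \<open>F \<noteq> 0\<close>
    by simp
  have sum_in: "y + F / y \<in> L"
    by (rule subfield_add[OF L_subfield \<open>y \<in> L\<close> \<open>F / y \<in> L\<close>])
  have diff_in: "y - F / y \<in> L"
    by (rule subfield_diff[OF L_subfield \<open>y \<in> L\<close> \<open>F / y \<in> L\<close>])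
  have "2 * s \<in> L"
    by (rule subfield_mult[OF L_subfield \<open>2 \<in> L\<close> \<open>s \<in> L\<close>])
  have "\<sigma> t1 = (\<sigma> y + \<sigma> (F / y)) / \<sigma> 2"
    unfolding t1_def F_def[symmetric]
    using sum_in \<open>2 \<in> L\<close> \<open>y \<in> L\<close> \<open>F / y \<in> L\<close> by (simp add: hom_divide hom_add)
  also have "\<dots> = t1"
    unfolding t1_def F_def[symmetric] \<sigma>_Fy \<sigma>_y' \<open>\<sigma> 2 = 2\<close> by (simp add: add.commute)
  finally show "t1 \<in> fixed_field"
    using t1_t2_in_L by simp
  have "\<sigma> t2 = (\<sigma> y - \<sigma> (F / y)) / (\<sigma> 2 * \<sigma> s)"
    unfolding t2_def F_def[symmetric]
    using diff_in \<open>2 * s \<in> L\<close> \<open>2 \<in> L\<close> \<open>s \<in> L\<close> \<open>y \<in> L\<close> \<open>F / y \<in> L\<close>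
    by (simp add: hom_divide hom_diff hom_mult)
  also have "\<dots> = t2"
    unfolding t2_def F_def[symmetric] \<sigma>_Fy \<sigma>_y' \<open>\<sigma> 2 = 2\<close> \<sigma>_s
    using s_nonzero two_nonzero by (simp add: field_simps)
  finally show "t2 \<in> fixed_field"
    using t1_t2_in_L by simp
qed

lemma quad_ext_subset_fixed_field: "quad_ext (I.rat_field x t1) t2 \<subseteq> fixed_field"
proof -
  have "range \<iota> \<subseteq> fixed_field"
    using generators_in_L(1) \<sigma>_\<iota> by blast
  moreover have "x \<in> fixed_field"
    using generators_in_L(3) \<sigma>_x by blast
  ultimately have "range \<iota> \<union> {x, t1, t2} \<subseteq> fixed_field"
    using t1_t2_fixed by blast
  then show ?thesis
    unfolding quad_ext_eq_gen_field by (rule gen_field_min[OF fixed_points_subfield])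
qed

lemma L_subset_quad_ext: "L \<subseteq> quad_ext (quad_ext (I.rat_field x t1) t2) s"
proof -
  define M where "M = quad_ext (I.rat_field x t1) t2"
  have M: "is_subfield M"
    unfolding M_def by (rule quad_ext_subfield[OF I.rat_field_subfield t2_square_in])
  have "range \<iota> \<union> {x, t1, t2} \<subseteq> M"
    unfolding M_def quad_ext_eq_gen_field by (rule gen_field_incl)
  then have "range \<iota> \<union> {x, t1, t2} \<subseteq> quad_ext M s"
    using subfield_subset_quad_ext[OF M] by blast
  moreover have "s * s \<in> M" "s \<in> quad_ext M s"
    using \<open>range \<iota> \<union> {x, t1, t2} \<subseteq> M\<close> generator_in_quad_ext[OF M] by (auto simp: sqrt_a)
  moreover have Ms: "is_subfield (quad_ext M s)"
    using calculation by (intro quad_ext_subfield[OF M]) auto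
  ultimately have "K \<subseteq> quad_ext M s"
    unfolding K_eq by (intro gen_field_min) auto
  moreover have "y \<in> quad_ext M s"
    using y_eq quad_extI[of t1 M t2 s] \<open>range \<iota> \<union> {x, t1, t2} \<subseteq> M\<close> by simp
  ultimately show ?thesis
    unfolding L_eq M_def[symmetric]
    using \<open>range \<iota> \<union> {x, t1, t2} \<subseteq> quad_ext M s\<close> by (intro gen_field_min[OF Ms]) auto
qed

lemma fixed_field_eq_quad_ext: "fixed_field = quad_ext (I.rat_field x t1) t2"
proof
  show "fixed_field \<subseteq> quad_ext (I.rat_field x t1) t2"
  proof
    fix e assume e: "e \<in> fixed_field"
    then obtain p q where pq: "p \<in> quad_ext (I.rat_field x t1) t2" "q \<in> quad_ext (I.rat_field x t1) t2"
      and "e = p + s * q"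
      using L_subset_quad_ext by (blast elim: quad_extE)
    then have "p \<in> fixed_field" "q \<in> fixed_field"
      using quad_ext_subset_fixed_field by auto
    then have "\<sigma> e = p - s * q"
      using \<open>e = p + s * q\<close> generators_in_L
      by (simp add: hom_add hom_mult subfield_mult[OF L_subfield] \<sigma>_s)
    then have "2 * (s * q) = 0"
      using e \<open>e = p + s * q\<close> by (simp add: algebra_simps)
    then show "e \<in> quad_ext (I.rat_field x t1) t2"
      using two_nonzero s_nonzero pq \<open>e = p + s * q\<close> by simp
  qed
qed (rule quad_ext_subset_fixed_field)

lemma fixed_field_eq_gen_field: "fixed_field = gen_field (range \<iota> \<union> {x, t1, t2})"
  using fixed_field_eq_quad_ext quad_ext_eq_gen_field by simp

lemma trdeg_fixed_field: "trdeg_eq (range \<iota>) fixed_field 2"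
  unfolding trdeg_eq_def
proof (intro exI[of _ "{x, t1}"] conjI ballI)
  show "{x, t1} \<subseteq> fixed_field"
    using generators_in_L \<sigma>_x t1_t2_fixed by auto
  show "card {x, t1} = 2"
    using x_ne_t1 by simp
  show "alg_indep (range \<iota>) {x, t1}"
    by (rule I.alg_indep_if_indep_pair[OF indep_x_t1 x_ne_t1])
  fix e assume "e \<in> fixed_field"
  then have "algebraic_over (I.rat_field x t1) e"
    unfolding fixed_field_eq_quad_ext
    by (rule algebraic_over_quad_ext[OF I.rat_field_subfield t2_square_in])
  then show "algebraic_over (gen_field (range \<iota> \<union> {x, t1})) e"
    unfolding I.gen_field_eq_rat_field .
qed simp

lemma k_iso_fixed_field:
  fixes j :: "'k \<Rightarrow> 'l::field"
  assumes "field_emb j" and L0: "L0 = gen_field (range j \<union> {x0, u1, u2})"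
    and "trdeg_eq (range j) L0 2" and rel: "u1 ^ 2 - j a * u2 ^ 2 = poly (map_poly j f) x0"
  shows "k_iso j L0 \<iota> fixed_field"
proof -
  interpret two_field_embeddings j \<iota>
    using \<open>field_emb j\<close> by unfold_locales
  have rel': "u1 ^ 2 - j a * u2 ^ 2 = J.peval f x0"
    using rel unfolding J.peval_def .
  have indep: "J.indep_pair x0 u1"
    using J.indep_pair_if_trdeg_two[OF _ a_nonzero rel'] assms by simp
  have "L0 = quad_ext (J.rat_field x0 u1) u2"
    unfolding L0 using rel' a_nonzero
    by (intro J.quad_ext_rat_field[symmetric] J.square_in_rat_field) (simp_all add: algebra_simps)
  moreover have "j a * u2 ^ 2 = u1 ^ 2 - J.peval f x0"
    using rel' by (simp add: algebra_simps)
  ultimately show ?thesis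
    unfolding fixed_field_eq_quad_ext
    by (simp add: k_iso_quad_ext_rat_field[OF nonsquare indep _ indep_x_t1 t2_relation])
qed

end

theorem lemma2p2:
  fixes a :: "'k::field" and f :: "'k poly"
    and \<iota> :: "'k \<Rightarrow> 'o::field" and s x y :: "'o" and \<sigma> :: "'o \<Rightarrow> 'o"
    and K Lxy :: "'o set"
  assumes char: "(2::'k) \<noteq> 0"
    and nonsq: "\<not> (\<exists>b. b * b = a)"
    and f_nz: "f \<noteq> 0"
    and emb: "field_emb \<iota>"
    and sqrt_a: "s * s = \<iota> a"
    and K_def: "K = gen_field (range \<iota> \<union> {s})"
    and xy_indep: "x \<noteq> y" "alg_indep K {x, y}"
    and Lxy_def: "Lxy = gen_field (K \<union> {x, y})"
    and \<sigma>_bij: "bij_betw \<sigma> Lxy Lxy"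
    and \<sigma>_hom: "\<forall>u\<in>Lxy. \<forall>v\<in>Lxy. \<sigma> (u + v) = \<sigma> u + \<sigma> v \<and> \<sigma> (u * v) = \<sigma> u * \<sigma> v"
    and \<sigma>_k: "\<forall>c. \<sigma> (\<iota> c) = \<iota> c"
    and \<sigma>_s: "\<sigma> s = - s"
    and \<sigma>_x: "\<sigma> x = x"
    and \<sigma>_y: "\<sigma> y = poly (map_poly \<iota> f) x / y"
  shows "(\<exists>t1 t2. t1 \<in> {u \<in> Lxy. \<sigma> u = u} \<and> t2 \<in> {u \<in> Lxy. \<sigma> u = u} \<and>
            {u \<in> Lxy. \<sigma> u = u} = gen_field (range \<iota> \<union> {x, t1, t2}) \<and>
            trdeg_eq (range \<iota>) {u \<in> Lxy. \<sigma> u = u} 2 \<and>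
            t1 ^ 2 - \<iota> a * t2 ^ 2 = poly (map_poly \<iota> f) x)
       \<and> (\<forall>(j :: 'k \<Rightarrow> 'l::field) x0 t1 t2 L0.
            field_emb j \<and> L0 = gen_field (range j \<union> {x0, t1, t2}) \<and>
            trdeg_eq (range j) L0 2 \<and>
            t1 ^ 2 - j a * t2 ^ 2 = poly (map_poly j f) x0
            \<longrightarrow> k_iso j L0 \<iota> {u \<in> Lxy. \<sigma> u = u})"
proof -
  interpret I: field_embedding \<iota>
    by unfold_locales (rule emb)
  interpret twisted_function_field \<iota> a f s x y \<sigma> K Lxy
    using assms by unfold_locales (simp_all add: I.peval_def)
  have "\<exists>t1 t2. t1 \<in> fixed_field \<and> t2 \<in> fixed_field \<and>
      fixed_field = gen_field (range \<iota> \<union> {x, t1, t2}) \<and> trdeg_eq (range \<iota>) fixed_field 2 \<and>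
      t1 ^ 2 - \<iota> a * t2 ^ 2 = poly (map_poly \<iota> f) x"
    using t1_t2_fixed fixed_field_eq_gen_field trdeg_fixed_field norm_t1_t2
    unfolding I.peval_def by blast
  moreover have "k_iso j L0 \<iota> fixed_field"
    if "field_emb j \<and> L0 = gen_field (range j \<union> {x0, t1, t2}) \<and> trdeg_eq (range j) L0 2 \<and>
      t1 ^ 2 - j a * t2 ^ 2 = poly (map_poly j f) x0"
    for j :: "'k \<Rightarrow> 'l::field" and x0 t1 t2 L0
    using that k_iso_fixed_field by blast
  ultimately show ?thesis
    by blast
qed
end
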